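(* Let $H_0,H_1$ be Hilbert spaces, let $A$ be self-adjoint on $H_0$ with domain $\mathcal D(A)$ and $\Omega_1$ self-adjoint on $H_1$ with domain $\mathcal D(\Omega_1)$. Let $\Gamma:\mathcal D(\Omega_1)\to H_0$ be linear with $\|\Gamma\phi\|^2\le C\|(\Omega_1+\mathrm i I)\phi\|^2$ for all $\phi\in\mathcal D(\Omega_1)$, some $C<\infty$. For $R>0$ put $\Phi_R=R(\Omega_1^2+R^2I)^{-1/2}$; then $\Gamma\Phi_R:H_1\to H_0$ is bounded, and we write $\Phi_R\Gamma^\dagger:=(\Gamma\Phi_R)^\dagger$. Let $S:=\Gamma(\Omega_1+\mathrm iI)^{-1}:H_1\to H_0$ (bounded). Assume that for every $v\in\mathcal D(A)$ the limit $Gv:=\lim_{R\to\infty}\Gamma\Phi_R S^\dagger v$ exists, and that there are $\delta<1$ and $\beta_\delta>0$ with $\|Gv\|\le\delta\|(A+\mathrm i\beta_\delta I)v\|$ for all $v\in\mathcal D(A)$. Define $$\mathcal D(\mathcal A)=\Big\{\begin{bmatrix}v\\ \phi-S^\dagger v\end{bmatrix}: v\in\mathcal D(A),\ \phi\in\mathcal D(\Omega_1)\Big\}\subset H_0\oplus H_1,$$ and for $[v,w]^T\in\mathcal D(\mathcal A)$ $$\mathcal A\begin{bmatrix}v\\ w\end{bmatrix}:=\lim_{R\to\infty}\begin{bmatrix}Av+\Gamma\Phi_R w\\ \Phi_R\Gamma^\dagger v+\Omega_1\Phi_R w\end{bmatrix}$$ (the limit exists on this domain). Then $\mathcal A$ is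 a self-adjoint operator on $H_0\oplus H_1$.
   Context: All Hilbert spaces are complex; $I$ denotes the identity on the relevant space and $X^\dagger$ the adjoint of $X$. *)

theory Defs
  imports "HOL-Analysis.Analysis"
begin

text \<open>A complex Hilbert space is encoded as a real Hilbert space (type class
real_inner + complete_space) together with an orthogonal complex structure J
(multiplication by the imaginary unit).\<close>

definition cstruct :: "('a::real_inner \<Rightarrow> 'a) \<Rightarrow> bool" where
  "cstruct J \<longleftrightarrow> linear J \<and> (\<forall>x. J (J x) = - x) \<and> (\<forall>x y. inner (J x) (J y) = inner x y)"

definition csc :: "('a::real_vector \<Rightarrow> 'a) \<Rightarrow> complex \<Rightarrow> 'a \<Rightarrow> 'a" where
  "csc J c x = Re c *\<^sub>R x + Im c *\<^sub>R J x"

text \<open>complex inner product, conjugate-linear in the first, linear in the second argument\<close>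
definition cinner :: "('a::real_inner \<Rightarrow> 'a) \<Rightarrow> 'a \<Rightarrow> 'a \<Rightarrow> complex" where
  "cinner J x y = Complex (inner x y) (inner (J x) y)"

definition self_adjoint :: "('a::real_inner \<Rightarrow> 'a) \<Rightarrow> 'a set \<Rightarrow> ('a \<Rightarrow> 'a) \<Rightarrow> bool" where
  "self_adjoint J D T \<longleftrightarrow> closure D = UNIV \<and>
     {(y, z). \<forall>x\<in>D. cinner J (T x) y = cinner J x z} = {(x, T x) | x. x \<in> D}"

definition badj :: "('a::real_inner \<Rightarrow> 'a) \<Rightarrow> ('b::real_inner \<Rightarrow> 'b) \<Rightarrow> ('b \<Rightarrow> 'a) \<Rightarrow> 'a \<Rightarrow> 'b" where
  "badj J0 J1 B y = (THE z. \<forall>x. cinner J0 (B x) y = cinner J1 x z)"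

definition cbounded :: "('a::real_normed_vector \<Rightarrow> 'a) \<Rightarrow> ('b::real_normed_vector \<Rightarrow> 'b) \<Rightarrow> ('a \<Rightarrow> 'b) \<Rightarrow> bool" where
  "cbounded Ja Jb B \<longleftrightarrow> bounded_linear B \<and> (\<forall>x. B (Ja x) = Jb (B x))"

definition resolv :: "('a::real_inner \<Rightarrow> 'a) \<Rightarrow> 'a set \<Rightarrow> ('a \<Rightarrow> 'a) \<Rightarrow> real \<Rightarrow> 'a \<Rightarrow> 'a" where
  "resolv J D Om s y = (THE x. x \<in> D \<and> Om x + s *\<^sub>R J x = y)"

definition sq_inv :: "'a set \<Rightarrow> ('a::real_vector \<Rightarrow> 'a) \<Rightarrow> real \<Rightarrow> 'a \<Rightarrow> 'a" where
  "sq_inv D Om R y = (THE x. x \<in> D \<and> Om x \<in> D \<and> Om (Om x) + (R^2) *\<^sub>R x = y)"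

definition psqrt :: "('a::real_inner \<Rightarrow> 'a) \<Rightarrow> ('a \<Rightarrow> 'a) \<Rightarrow> 'a \<Rightarrow> 'a" where
  "psqrt J K = (THE P. cbounded J J P \<and> (\<forall>x y. cinner J (P x) y = cinner J x (P y))
                   \<and> (\<forall>x. 0 \<le> inner x (P x)) \<and> (\<forall>x. P (P x) = K x))"

definition PhiR :: "('a::real_inner \<Rightarrow> 'a) \<Rightarrow> 'a set \<Rightarrow> ('a \<Rightarrow> 'a) \<Rightarrow> real \<Rightarrow> 'a \<Rightarrow> 'a" where
  "PhiR J D Om R = (\<lambda>x. R *\<^sub>R psqrt J (sq_inv D Om R) x)"

end

(*
  Write \<Gamma> = S (\<Omega>\<^sub>1 + i) with S bounded. Then \<Gamma> \<Phi>\<^sub>R is bounded with adjoint (\<Omega>\<^sub>1 - i) \<Phi>\<^sub>R S\<^sup>\<dagger>,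
  and since \<Phi>\<^sub>R \<rightarrow> I strongly, the defining limit exists on the domain and equals
  \<A> (v, \<phi> - S\<^sup>\<dagger> v) = (A v + \<Gamma> \<phi> - G v, \<Omega>\<^sub>1 \<phi> - i S\<^sup>\<dagger> v).
  The operator \<Phi>\<^sub>R = (I - X)\<^sup>1\<^sup>/\<^sup>2, X = \<Omega>\<^sub>1\<^sup>2 (\<Omega>\<^sub>1\<^sup>2 + R\<^sup>2)\<^sup>-\<^sup>1, is built from the binomial series of
  \<surd>(1 - z), which converges absolutely because X is a symmetric contraction.
  \<A> is symmetric because the skew part of G, \<langle>G v, u\<rangle> - \<langle>v, G u\<rangle> = 2 \<langle>i S\<^sup>\<dagger> v, S\<^sup>\<dagger> u\<rangle>
  (real inner products), cancels the cross terms.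
  For self-adjointness it suffices that \<A> \<plusminus> i\<beta> is onto. Solving the second row for \<phi> reduces
  this to the surjectivity of (A + i m) - (G - B\<^sub>m) on D(A), m = \<plusminus>\<beta>, where G - B\<^sub>m is dissipative
  and (A + i\<beta>)-bounded with relative bound \<delta> < 1; dissipativity gives the lower bound
  \<beta> |v| \<le> |(A + i m - t (G - B\<^sub>m)) v| uniformly in t \<in> [0, 1], and the method of continuity
  (Banach's fixed point theorem in finitely many steps) carries surjectivity from t = 0 to t = 1.
*)

theory Submission
  imports Defs
begin

section \<open>Hilbert space preliminaries\<close>

lemma parallelogram_law:
  fixes a b :: "'a::real_inner"
  shows "norm (a + b)^2 + norm (a - b)^2 = 2 * norm a^2 + 2 * norm b^2"
  by (simp add: power2_norm_eq_inner inner_add inner_diff inner_commute algebra_simps)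

lemma inner_right_cancel:
  fixes y z :: "'a::real_inner"
  assumes "\<And>x. inner x y = inner x z"
  shows "y = z"
proof -
  have "inner (y - z) (y - z) = 0"
    using assms[of "y - z"] by (simp add: inner_diff_right)
  then show ?thesis by simp
qed

lemma norm_diff_sq_le_near_minimal:
  fixes x :: "'a::real_inner"
  assumes "convex M" "a \<in> M" "b \<in> M" "\<And>q. q \<in> M \<Longrightarrow> d \<le> norm (x - q)^2"
  shows "norm (a - b)^2 \<le> 2 * (norm (x - a)^2 - d) + 2 * (norm (x - b)^2 - d)"
proof -
  have "(1/2) *\<^sub>R a + (1/2) *\<^sub>R b \<in> M"
    using assms(1-3) unfolding convex_def by auto
  then have "4 * d \<le> 4 * norm (x - ((1/2) *\<^sub>R a + (1/2) *\<^sub>R b))^2"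
    using assms(4) by simp
  also have "\<dots> = norm ((x - a) + (x - b))^2"
  proof -
    have "(x - a) + (x - b) = 2 *\<^sub>R (x - ((1/2) *\<^sub>R a + (1/2) *\<^sub>R b))"
      by (simp add: algebra_simps scaleR_2)
    then show ?thesis by (simp add: power_mult_distrib)
  qed
  finally show ?thesis
    using parallelogram_law[of "x - a" "x - b"] by (simp add: norm_minus_commute)
qed

lemma minimizing_sequence_Cauchy:
  fixes x :: "'a::real_inner"
  assumes "convex M" "\<And>n. q n \<in> M" "\<And>y. y \<in> M \<Longrightarrow> d \<le> norm (x - y)^2"
    and q: "\<And>n. norm (x - q n)^2 < d + 1 / real (Suc n)"
  shows "Cauchy q"
proof (rule metric_CauchyI)
  fix e :: real assume "e > 0"
  obtain N where "4 / e^2 < real N"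
    using reals_Archimedean2 by blast
  then have "4 / e^2 < real (Suc N)"
    by simp
  then have N: "4 / real (Suc N) < e^2"
    using \<open>e > 0\<close> by (simp add: field_simps)
  have "dist (q m) (q n) < e" if "N \<le> m" "N \<le> n" for m n
  proof -
    have "2 / real (Suc m) \<le> 2 / real (Suc N)" "2 / real (Suc n) \<le> 2 / real (Suc N)"
      using that by (simp_all add: frac_le)
    moreover have "norm (q m - q n)^2 \<le> 2 / real (Suc m) + 2 / real (Suc n)"
      using norm_diff_sq_le_near_minimal[OF assms(1) assms(2)[of m] assms(2)[of n] assms(3)] q[of m] q[of n] by simp
    ultimately have "dist (q m) (q n)^2 < e^2"
      using N by (simp add: dist_norm)
    with \<open>e > 0\<close> show ?thesis
      by (simp add: power_less_imp_less_base)
  qed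
  then show "\<exists>N. \<forall>m\<ge>N. \<forall>n\<ge>N. dist (q m) (q n) < e" by blast
qed

lemma nearest_point_exists:
  fixes M :: "'a::{real_inner,complete_space} set"
  assumes "closed M" "convex M" "M \<noteq> {}"
  shows "\<exists>p\<in>M. \<forall>q\<in>M. dist x p \<le> dist x q"
proof -
  define d where "d = (INF q\<in>M. norm (x - q)^2)"
  have bdd: "bdd_below ((\<lambda>q. norm (x - q)^2) ` M)"
    by (rule bdd_belowI[of _ 0]) auto
  have d_le: "d \<le> norm (x - q)^2" if "q \<in> M" for q
    unfolding d_def using bdd that by (rule cINF_lower)
  have "\<exists>q\<in>M. norm (x - q)^2 < d + 1 / real (Suc n)" for n
    using cINF_less_iff[OF assms(3) bdd, of "d + 1 / real (Suc n)"] unfolding d_def by simp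
  then obtain q where qM: "\<And>n. q n \<in> M" and q: "\<And>n. norm (x - q n)^2 < d + 1 / real (Suc n)"
    by metis
  obtain p where lim: "q \<longlonglongrightarrow> p"
    using minimizing_sequence_Cauchy[OF assms(2) qM d_le q] Cauchy_convergent_iff convergent_def by blast
  have "norm (x - p)^2 \<le> norm (x - r)^2" if "r \<in> M" for r
  proof (rule LIMSEQ_le)
    show "(\<lambda>n. norm (x - q n)^2) \<longlonglongrightarrow> norm (x - p)^2"
      by (intro tendsto_intros lim)
    show "(\<lambda>n. norm (x - r)^2 + 1 / real (Suc n)) \<longlonglongrightarrow> norm (x - r)^2"
      using tendsto_add[OF tendsto_const LIMSEQ_inverse_real_of_nat] by (simp add: inverse_eq_divide)
    have "norm (x - q n)^2 \<le> norm (x - r)^2 + 1 / real (Suc n)" for n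
      using q[of n] d_le[OF that] by linarith
    then show "\<exists>N. \<forall>n\<ge>N. norm (x - q n)^2 \<le> norm (x - r)^2 + 1 / real (Suc n)"
      by blast
  qed
  moreover have "p \<in> M"
    using assms(1) qM lim closed_sequentially by blast
  ultimately show ?thesis
    by (metis dist_norm norm_ge_zero power2_le_imp_le)
qed

lemma orthogonal_projection_exists:
  fixes M :: "'a::{real_inner,complete_space} set"
  assumes "closed M" "subspace M"
  shows "\<exists>p\<in>M. \<forall>m\<in>M. inner (x - p) m = 0"
proof -
  obtain p where p: "p \<in> M" and nearest: "\<forall>q\<in>M. dist x p \<le> dist x q"
    using nearest_point_exists[OF assms(1) subspace_imp_convex[OF assms(2)]] assms(2)
    by (metis empty_iff subspace_0)
  have "inner (x - p) m = 0" if "m \<in> M" for m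
  proof -
    have "p + m \<in> M" "p - m \<in> M"
      using assms(2) p that by (simp_all add: subspace_add subspace_diff)
    then have "inner (x - p) ((p + m) - p) \<le> 0" "inner (x - p) ((p - m) - p) \<le> 0"
      using any_closest_point_dot[OF subspace_imp_convex[OF assms(2)] assms(1) p _ nearest]
      by blast+
    then show ?thesis by simp
  qed
  with p show ?thesis by blast
qed

lemma closed_subspace_eq_UNIV:
  fixes M :: "'a::{real_inner,complete_space} set"
  assumes "closed M" "subspace M" and orth: "\<And>z. (\<forall>m\<in>M. inner z m = 0) \<Longrightarrow> z = 0"
  shows "M = UNIV"
proof -
  have "x \<in> M" for x
    using orthogonal_projection_exists[OF assms(1,2), of x] orth[of "x - _"] by force
  then show ?thesis by blast
qed

lemma riesz_representation:
  fixes f :: "'a::{real_inner,complete_space} \<Rightarrow> real"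
  assumes "bounded_linear f"
  shows "\<exists>z. \<forall>x. f x = inner x z"
proof (cases "\<forall>x. f x = 0")
  case True then show ?thesis by (intro exI[of _ 0]) auto
next
  case False
  then obtain x0 where fx0: "f x0 \<noteq> 0" by blast
  interpret f: bounded_linear f by fact
  define N where "N = {x. f x = 0}"
  have "closed N"
    unfolding N_def by (intro closed_Collect_eq continuous_intros f.continuous_on continuous_on_id)
  moreover have "subspace N"
    unfolding N_def subspace_def by (auto simp: f.add f.scale f.zero)
  ultimately obtain p where "p \<in> N" and orth: "\<forall>m\<in>N. inner (x0 - p) m = 0"
    using orthogonal_projection_exists by blast
  define e where "e = x0 - p"
  have fe: "f e = f x0"
    using \<open>p \<in> N\<close> by (simp add: e_def N_def f.diff)
  have "f y = inner y ((f e / inner e e) *\<^sub>R e)" for y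
  proof -
    have "y - (f y / f e) *\<^sub>R e \<in> N"
      using fe fx0 by (simp add: N_def f.diff f.scale)
    then have "inner (y - (f y / f e) *\<^sub>R e) e = 0"
      using orth by (metis e_def inner_commute)
    moreover have "e \<noteq> 0"
      using fe fx0 by auto
    ultimately show ?thesis
      using fe fx0 by (simp add: inner_diff_left field_simps)
  qed
  then show ?thesis by blast
qed

definition is_adjoint :: "('b::real_inner \<Rightarrow> 'a::real_inner) \<Rightarrow> ('a \<Rightarrow> 'b) \<Rightarrow> bool" where
  "is_adjoint B B' \<longleftrightarrow> (\<forall>x y. inner (B x) y = inner x (B' y))"

lemma bounded_adjoint_exists:
  fixes B :: "'b::{real_inner,complete_space} \<Rightarrow> 'a::{real_inner,complete_space}"
  assumes "bounded_linear B"
  shows "\<exists>B'. is_adjoint B B' \<and> bounded_linear B'"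
proof -
  interpret B: bounded_linear B by fact
  have "\<exists>z. \<forall>x. inner (B x) y = inner x z" for y
    by (rule riesz_representation) (intro bounded_linear_compose[OF bounded_linear_inner_left assms])
  then obtain B' where B': "\<And>x y. inner (B x) y = inner x (B' y)"
    by metis
  obtain K where K: "\<And>x. norm (B x) \<le> norm x * K" "K > 0"
    using B.pos_bounded by blast
  have "bounded_linear B'"
  proof (rule bounded_linear_intro[where K=K])
    show "B' (y1 + y2) = B' y1 + B' y2" for y1 y2
      by (rule inner_right_cancel) (simp add: inner_add_right B'[symmetric])
    show "B' (r *\<^sub>R y) = r *\<^sub>R B' y" for r y
      by (rule inner_right_cancel) (simp add: B'[symmetric])
    show "norm (B' y) \<le> norm y * K" for y
    proof -
      have "norm (B' y)^2 = inner (B (B' y)) y"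
        using B'[of "B' y" y] by (simp add: power2_norm_eq_inner)
      also have "\<dots> \<le> norm (B' y) * K * norm y"
        using norm_cauchy_schwarz[of "B (B' y)" y] K(1)[of "B' y"]
        by (meson mult_right_mono norm_ge_zero order_trans)
      finally show ?thesis
        using K(2) by (cases "B' y = 0") (auto simp: power2_eq_square algebra_simps)
    qed
  qed
  then show ?thesis
    using B' by (auto simp: is_adjoint_def)
qed

lemma Cauchy_if_norm_diff_le:
  fixes f :: "nat \<Rightarrow> 'a::real_normed_vector" and xs :: "nat \<Rightarrow> 'b::real_normed_vector"
  assumes "Cauchy xs" "c > 0" "\<And>m n. c * norm (f m - f n) \<le> norm (xs m - xs n)"
  shows "Cauchy f"
proof (rule metric_CauchyI)
  fix e :: real assume "e > 0"
  with assms(2) have "c * e > 0" by simp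
  then obtain N where N: "\<forall>m\<ge>N. \<forall>n\<ge>N. dist (xs m) (xs n) < c * e"
    using metric_CauchyD[OF assms(1)] by blast
  have "dist (f m) (f n) < e" if "N \<le> m" "N \<le> n" for m n
  proof -
    have "c * norm (f m - f n) < c * e"
      using assms(3)[of m n] N[rule_format, OF that] unfolding dist_norm by linarith
    with assms(2) show ?thesis by (simp add: dist_norm)
  qed
  then show "\<exists>N. \<forall>m\<ge>N. \<forall>n\<ge>N. dist (f m) (f n) < e" by blast
qed

lemma bounded_linear_eq_on_dense:
  fixes f g :: "'b::real_normed_vector \<Rightarrow> 'c::real_normed_vector"
  assumes "closure S = UNIV" "bounded_linear f" "bounded_linear g" "\<And>y. y \<in> S \<Longrightarrow> f y = g y"
  shows "f y = g y"
proof -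
  have "closed {y. f y - g y = 0}"
    using assms(2,3) by (intro closed_Collect_eq continuous_intros linear_continuous_on continuous_on_id) auto
  moreover have "S \<subseteq> {y. f y - g y = 0}"
    using assms(4) by auto
  ultimately have "closure S \<subseteq> {y. f y - g y = 0}"
    by (rule closure_minimal[rotated])
  with assms(1) show ?thesis by auto
qed

text \<open>The library states the next two facts for the class \<open>banach\<close>, which the sort
  \<open>{real_normed_vector, complete_space}\<close> of the Hilbert spaces below is not an instance of.\<close>

lemma summable_comparison_complete:
  fixes f :: "nat \<Rightarrow> 'a::{real_normed_vector,complete_space}"
  assumes le: "\<And>n. norm (f n) \<le> g n" and g: "summable g"
  shows "summable f"
  unfolding summable_iff_convergent
proof (intro Cauchy_convergent CauchyI')
  fix e :: real assume "e > 0"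
  then obtain N where N: "\<And>m n. m \<ge> N \<Longrightarrow> norm (sum g {m..<n}) < e"
    using g unfolding summable_Cauchy by blast
  have "dist (\<Sum>i<m. f i) (\<Sum>i<n. f i) < e" if "N \<le> m" "m < n" for m n
  proof -
    have "(\<Sum>i<n. f i) - (\<Sum>i<m. f i) = sum f {m..<n}"
      using that by (simp add: atLeast0LessThan[symmetric] sum_diff_nat_ivl)
    then have "dist (\<Sum>i<m. f i) (\<Sum>i<n. f i) = norm (sum f {m..<n})"
      by (metis dist_norm norm_minus_commute)
    also have "\<dots> \<le> (\<Sum>i\<in>{m..<n}. norm (f i))"
      by (rule norm_sum)
    also have "\<dots> \<le> sum g {m..<n}"
      using le by (rule sum_mono)
    also have "\<dots> < e"
      using N[OF that(1), of n] by simp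
    finally show ?thesis .
  qed
  then show "\<exists>M. \<forall>m\<ge>M. \<forall>n>m. dist (\<Sum>i<m. f i) (\<Sum>i<n. f i) < e" by blast
qed

lemma norm_suminf_le_complete:
  fixes f :: "nat \<Rightarrow> 'a::{real_normed_vector,complete_space}"
  assumes le: "\<And>n. norm (f n) \<le> g n" and g: "summable g"
  shows "norm (suminf f) \<le> suminf g"
proof (rule LIMSEQ_le)
  show "(\<lambda>n. norm (\<Sum>i<n. f i)) \<longlonglongrightarrow> norm (suminf f)"
    by (intro tendsto_norm summable_LIMSEQ summable_comparison_complete[OF le g])
  show "(\<lambda>n. \<Sum>i<n. g i) \<longlonglongrightarrow> suminf g"
    by (rule summable_LIMSEQ[OF g])
  have "norm (\<Sum>i<n. f i) \<le> (\<Sum>i<n. g i)" for n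
  proof -
    have "(\<Sum>i<n. norm (f i)) \<le> (\<Sum>i<n. g i)"
      by (rule sum_mono) (rule le)
    with norm_sum[of f "{..<n}"] show ?thesis by linarith
  qed
  then show "\<exists>N. \<forall>n\<ge>N. norm (\<Sum>i<n. f i) \<le> (\<Sum>i<n. g i)"
    by blast
qed

section \<open>Complex structures\<close>

locale complex_structure =
  fixes J :: "'a::real_inner \<Rightarrow> 'a"
  assumes cstruct: "cstruct J"
begin

lemma linear_J: "linear J"
  using cstruct by (simp add: cstruct_def)

lemma J_J [simp]: "J (J x) = - x"
  using cstruct by (simp add: cstruct_def)

lemma inner_J_J [simp]: "inner (J x) (J y) = inner x y"
  using cstruct by (simp add: cstruct_def)

lemma J_add [simp]: "J (x + y) = J x + J y"
  using linear_J by (rule linear_add)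

lemma J_scaleR [simp]: "J (r *\<^sub>R x) = r *\<^sub>R J x"
  using linear_J by (rule linear_scale)

lemma J_0 [simp]: "J 0 = 0"
  using linear_J by (rule linear_0)

lemma J_diff [simp]: "J (x - y) = J x - J y"
  using linear_J by (rule linear_diff)

lemma inner_J_left: "inner (J x) y = - inner x (J y)"
  using inner_J_J[of x "J y"] by simp

lemma inner_J_self [simp]: "inner (J x) x = 0" "inner x (J x) = 0"
  using inner_J_left[of x x] by (simp_all add: inner_commute)

lemma norm_J [simp]: "norm (J x) = norm x"
  by (simp add: norm_eq_sqrt_inner)

lemma bounded_linear_J: "bounded_linear J"
  by (intro bounded_linear_intro[where K=1]) auto

lemma tendsto_J [tendsto_intros]: "(f \<longlongrightarrow> l) F \<Longrightarrow> ((\<lambda>x. J (f x)) \<longlongrightarrow> J l) F"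
  using bounded_linear.tendsto[OF bounded_linear_J] .

lemma cinner_eq_iff:
  "cinner J x y = cinner J a b \<longleftrightarrow> inner x y = inner a b \<and> inner (J x) y = inner (J a) b"
  by (simp add: cinner_def complex_eq_iff)

lemma cinner_J_right: "cinner J x (J y) = \<i> * cinner J x y"
  by (simp add: cinner_def complex_eq_iff inner_J_left)

lemma csc_imaginary_unit: "csc J \<i> x = J x"
  by (simp add: csc_def)

lemma csc_of_real: "csc J (complex_of_real r) x = r *\<^sub>R x"
  by (simp add: csc_def)

end

lemma is_adjoint_J_commute:
  assumes "complex_structure J0" "complex_structure J1"
    and "\<And>x. B (J1 x) = J0 (B x)" "is_adjoint B B'"
  shows "B' (J0 y) = J1 (B' y)"
proof (rule inner_right_cancel)
  interpret J0: complex_structure J0 by fact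
  interpret J1: complex_structure J1 by fact
  fix x
  have "inner x (B' (J0 y)) = - inner (J0 (B x)) y"
    using assms(4) by (simp add: is_adjoint_def J0.inner_J_left)
  also have "\<dots> = inner x (J1 (B' y))"
    using assms(3,4) by (simp add: is_adjoint_def J1.inner_J_left flip: assms(3))
  finally show "inner x (B' (J0 y)) = inner x (J1 (B' y))" .
qed

lemma badj_eqI:
  assumes "complex_structure J0" "complex_structure J1"
    and "\<And>x. B (J1 x) = J0 (B x)" "is_adjoint B B'"
  shows "badj J0 J1 B = B'"
proof
  fix y
  have adj: "\<forall>x. cinner J0 (B x) y = cinner J1 x (B' y)"
    using assms(3,4) unfolding is_adjoint_def cinner_def by (metis (full_types))
  show "badj J0 J1 B y = B' y"
    unfolding badj_def
  proof (rule the_equality)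
    fix z assume "\<forall>x. cinner J0 (B x) y = cinner J1 x z"
    then have "inner x z = inner x (B' y)" for x
      using adj by (simp add: cinner_def complex_eq_iff)
    then show "z = B' y" by (rule inner_right_cancel)
  qed (fact adj)
qed

lemma badj_cbounded:
  fixes B :: "'b::{real_inner,complete_space} \<Rightarrow> 'a::{real_inner,complete_space}"
  assumes "complex_structure J0" "complex_structure J1" "cbounded J1 J0 B"
  shows "is_adjoint B (badj J0 J1 B)" "cbounded J0 J1 (badj J0 J1 B)"
proof -
  have B: "bounded_linear B" "\<And>x. B (J1 x) = J0 (B x)"
    using assms(3) by (auto simp: cbounded_def)
  obtain B' where B': "is_adjoint B B'" "bounded_linear B'"
    using bounded_adjoint_exists[OF B(1)] by blast
  have "badj J0 J1 B = B'"
    by (rule badj_eqI[OF assms(1,2) B(2) B'(1)])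
  then show "is_adjoint B (badj J0 J1 B)" "cbounded J0 J1 (badj J0 J1 B)"
    using B' is_adjoint_J_commute[OF assms(1,2) B(2) B'(1)] by (auto simp: cbounded_def)
qed

section \<open>Self-adjoint operators\<close>

locale selfadjoint = complex_structure J for J :: "'a::{real_inner,complete_space} \<Rightarrow> 'a" +
  fixes D :: "'a set" and T :: "'a \<Rightarrow> 'a"
  assumes self_adjoint: "self_adjoint J D T"
begin

lemma closure_domain: "closure D = UNIV"
  using self_adjoint by (simp add: self_adjoint_def)

lemma adjoint_graph_iff:
  "y \<in> D \<and> z = T y \<longleftrightarrow> (\<forall>x\<in>D. cinner J (T x) y = cinner J x z)"
proof -
  have "(y, z) \<in> {(y, z). \<forall>x\<in>D. cinner J (T x) y = cinner J x z} \<longleftrightarrow> (y, z) \<in> {(x, T x) | x. x \<in> D}"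
    using self_adjoint by (simp add: self_adjoint_def)
  then show ?thesis by auto
qed

lemma add_mem_domain: "x \<in> D \<Longrightarrow> y \<in> D \<Longrightarrow> x + y \<in> D"
  and T_add: "x \<in> D \<Longrightarrow> y \<in> D \<Longrightarrow> T (x + y) = T x + T y"
  using adjoint_graph_iff[of x "T x"] adjoint_graph_iff[of y "T y"] adjoint_graph_iff[of "x + y" "T x + T y"]
  by (simp_all add: cinner_def complex_eq_iff inner_add_right)

lemma scaleR_mem_domain: "x \<in> D \<Longrightarrow> r *\<^sub>R x \<in> D"
  and T_scaleR: "x \<in> D \<Longrightarrow> T (r *\<^sub>R x) = r *\<^sub>R T x"
  using adjoint_graph_iff[of x "T x"] adjoint_graph_iff[of "r *\<^sub>R x" "r *\<^sub>R T x"]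
  by (simp_all add: cinner_def complex_eq_iff)

lemma J_mem_domain: "x \<in> D \<Longrightarrow> J x \<in> D"
  and T_J: "x \<in> D \<Longrightarrow> T (J x) = J (T x)"
  using adjoint_graph_iff[of x "T x"] adjoint_graph_iff[of "J x" "J (T x)"]
  by (simp_all add: cinner_J_right)

lemma diff_mem_domain: "x \<in> D \<Longrightarrow> y \<in> D \<Longrightarrow> x - y \<in> D"
  using add_mem_domain[of x "(-1) *\<^sub>R y"] scaleR_mem_domain[of y "-1"] by simp

lemma T_diff: "x \<in> D \<Longrightarrow> y \<in> D \<Longrightarrow> T (x - y) = T x - T y"
  using T_add[of x "(-1) *\<^sub>R y"] T_scaleR[of y "-1"] scaleR_mem_domain[of y "-1"] by simp

lemma zero_mem_domain: "0 \<in> D" and T_0: "T 0 = 0"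
  using adjoint_graph_iff[of 0 0] by (auto simp: cinner_def zero_complex_def)

lemma sum_mem_domain: "finite I \<Longrightarrow> (\<And>i. i \<in> I \<Longrightarrow> f i \<in> D) \<Longrightarrow> sum f I \<in> D"
  and T_sum: "finite I \<Longrightarrow> (\<And>i. i \<in> I \<Longrightarrow> f i \<in> D) \<Longrightarrow> T (sum f I) = (\<Sum>i\<in>I. T (f i))"
  by (induction I rule: finite_induct) (simp_all add: zero_mem_domain T_0 add_mem_domain T_add)

lemma T_symmetric: "x \<in> D \<Longrightarrow> y \<in> D \<Longrightarrow> inner (T x) y = inner x (T y)"
  using adjoint_graph_iff[of y "T y"] by (simp add: cinner_eq_iff)

lemma real_adjoint_graph_iff: "y \<in> D \<and> z = T y \<longleftrightarrow> (\<forall>x\<in>D. inner (T x) y = inner x z)"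
proof
  assume "\<forall>x\<in>D. inner (T x) y = inner x z"
  moreover have "inner (J (T x)) y = inner (J x) z" if "x \<in> D" "\<forall>x\<in>D. inner (T x) y = inner x z" for x
    using that J_mem_domain T_J by metis
  ultimately show "y \<in> D \<and> z = T y"
    by (simp add: adjoint_graph_iff cinner_eq_iff)
qed (auto simp: T_symmetric)

lemma closed_graph:
  assumes "\<And>n. xs n \<in> D" "xs \<longlonglongrightarrow> x" "(\<lambda>n. T (xs n)) \<longlonglongrightarrow> z"
  shows "x \<in> D" "T x = z"
proof -
  have "inner (T x') x = inner x' z" if "x' \<in> D" for x'
  proof (rule LIMSEQ_unique)
    show "(\<lambda>n. inner (T x') (xs n)) \<longlonglongrightarrow> inner (T x') x"
      by (intro tendsto_intros assms)
    show "(\<lambda>n. inner (T x') (xs n)) \<longlonglongrightarrow> inner x' z"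
      using T_symmetric[OF that assms(1)] by (simp add: tendsto_intros assms(3))
  qed
  then show "x \<in> D" "T x = z"
    using real_adjoint_graph_iff by metis+
qed

lemma inner_T_J_self: "x \<in> D \<Longrightarrow> inner (T x) (J x) = 0"
  using T_symmetric[of x "J x"] by (simp add: J_mem_domain T_J inner_J_left inner_commute)

lemma norm_T_plus_J_squared:
  assumes "x \<in> D"
  shows "norm (T x + s *\<^sub>R J x)^2 = norm (T x)^2 + s^2 * norm x^2"
  unfolding power2_norm_eq_inner using inner_T_J_self[OF assms]
  by (simp add: inner_add inner_commute power2_eq_square algebra_simps)

lemma norm_le_dissipative_perturbation:
  assumes "x \<in> D" "m * inner p (J x) \<le> 0"
  shows "\<bar>m\<bar> * norm x \<le> norm (T x + m *\<^sub>R J x - p)"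
proof -
  let ?u = "T x + m *\<^sub>R J x - p"
  have "(\<bar>m\<bar> * norm x)^2 = m^2 * norm x^2"
    by (simp add: power_mult_distrib)
  also have "\<dots> = m * m * inner x x"
    by (simp only: power2_norm_eq_inner power2_eq_square[of m])
  also have "\<dots> \<le> m * inner ?u (J x)"
    using assms(2) by (simp add: inner_diff_left inner_add_left inner_T_J_self[OF assms(1)] right_diff_distrib)
  also have "\<dots> \<le> \<bar>m\<bar> * \<bar>inner ?u (J x)\<bar>"
    by (simp add: abs_mult[symmetric])
  also have "\<dots> \<le> \<bar>m\<bar> * (norm ?u * norm x)"
    using Cauchy_Schwarz_ineq2[of ?u "J x"] by (simp add: mult_left_mono)
  finally have "(\<bar>m\<bar> * norm x) * (\<bar>m\<bar> * norm x) \<le> (\<bar>m\<bar> * norm x) * norm ?u"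
    by (simp add: power2_eq_square mult_ac)
  then show ?thesis
    by (cases "\<bar>m\<bar> * norm x = 0") (auto simp: mult_le_cancel_left)
qed

lemma norm_le_T_plus_J: "x \<in> D \<Longrightarrow> \<bar>s\<bar> * norm x \<le> norm (T x + s *\<^sub>R J x)"
  using norm_le_dissipative_perturbation[of x s 0] by simp

lemma norm_T_le_T_plus_J: "x \<in> D \<Longrightarrow> norm (T x) \<le> norm (T x + s *\<^sub>R J x)"
  by (rule power2_le_imp_le) (simp_all add: norm_T_plus_J_squared)

lemma closed_range_T_plus_J:
  assumes "s \<noteq> 0"
  shows "closed ((\<lambda>x. T x + s *\<^sub>R J x) ` D)"
proof (rule closed_sequential_limits[THEN iffD2], intro allI impI, elim conjE)
  fix ys l assume "\<forall>n. ys n \<in> (\<lambda>x. T x + s *\<^sub>R J x) ` D" and lim: "ys \<longlonglongrightarrow> l"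
  then have "\<forall>n. \<exists>x. x \<in> D \<and> ys n = T x + s *\<^sub>R J x"
    by blast
  then obtain xs where xs: "\<And>n. xs n \<in> D" "\<And>n. ys n = T (xs n) + s *\<^sub>R J (xs n)"
    by metis
  have diff: "ys m - ys n = T (xs m - xs n) + s *\<^sub>R J (xs m - xs n)" for m n
    by (simp add: xs T_diff algebra_simps)
  have "Cauchy xs"
  proof (rule Cauchy_if_norm_diff_le[OF LIMSEQ_imp_Cauchy[OF lim]])
    show "\<bar>s\<bar> > 0" using assms by simp
    show "\<bar>s\<bar> * norm (xs m - xs n) \<le> norm (ys m - ys n)" for m n
      unfolding diff by (rule norm_le_T_plus_J[OF diff_mem_domain[OF xs(1) xs(1)]])
  qed
  then obtain x where x: "xs \<longlonglongrightarrow> x"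
    using Cauchy_convergent_iff convergent_def by blast
  have "Cauchy (\<lambda>n. T (xs n))"
  proof (rule Cauchy_if_norm_diff_le[OF LIMSEQ_imp_Cauchy[OF lim]])
    show "1 * norm (T (xs m) - T (xs n)) \<le> norm (ys m - ys n)" for m n
      using norm_T_le_T_plus_J[OF diff_mem_domain[OF xs(1) xs(1)]] by (simp add: diff T_diff xs(1))
  qed simp
  then obtain z where z: "(\<lambda>n. T (xs n)) \<longlonglongrightarrow> z"
    using Cauchy_convergent_iff convergent_def by blast
  have "ys = (\<lambda>n. T (xs n) + s *\<^sub>R J (xs n))"
    using xs(2) by blast
  then have "ys \<longlonglongrightarrow> T x + s *\<^sub>R J x"
    using tendsto_add[OF z tendsto_scaleR[OF tendsto_const tendsto_J[OF x]]] closed_graph(2)[OF xs(1) x z]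
    by simp
  then show "l \<in> (\<lambda>x. T x + s *\<^sub>R J x) ` D"
    using LIMSEQ_unique[OF lim] closed_graph(1)[OF xs(1) x z] by blast
qed

lemma subspace_range_T_plus_J: "subspace ((\<lambda>x. T x + s *\<^sub>R J x) ` D)"
  unfolding subspace_def
proof (intro conjI ballI allI)
  let ?M = "(\<lambda>x. T x + s *\<^sub>R J x) ` D"
  show "0 \<in> ?M"
    using zero_mem_domain by (force simp: T_0)
  fix a b assume "a \<in> ?M" "b \<in> ?M"
  then obtain x x' where "x \<in> D" "x' \<in> D" "a = T x + s *\<^sub>R J x" "b = T x' + s *\<^sub>R J x'"
    by blast
  then show "a + b \<in> ?M"
    by (intro image_eqI[of _ _ "x + x'"]) (simp_all add: add_mem_domain T_add algebra_simps)
next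
  fix c a assume "a \<in> (\<lambda>x. T x + s *\<^sub>R J x) ` D"
  then obtain x where "x \<in> D" "a = T x + s *\<^sub>R J x"
    by blast
  then show "c *\<^sub>R a \<in> (\<lambda>x. T x + s *\<^sub>R J x) ` D"
    by (intro image_eqI[of _ _ "c *\<^sub>R x"]) (simp_all add: scaleR_mem_domain T_scaleR scaleR_add_right)
qed

lemma orthogonal_range_T_plus_J_eq_0:
  assumes "s \<noteq> 0" and orth: "\<forall>m\<in>(\<lambda>x. T x + s *\<^sub>R J x) ` D. inner z m = 0"
  shows "z = 0"
proof -
  have "inner (T x) z = inner x (s *\<^sub>R J z)" if "x \<in> D" for x
  proof -
    have "T x + s *\<^sub>R J x \<in> (\<lambda>x. T x + s *\<^sub>R J x) ` D"
      by (rule imageI) (rule that)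
    then have "inner z (T x + s *\<^sub>R J x) = 0"
      by (rule orth[rule_format])
    moreover have "inner z (J x) = - inner x (J z)"
      using inner_J_left[of x z] by (simp add: inner_commute)
    ultimately show ?thesis
      by (simp add: inner_add_right inner_commute)
  qed
  then have "z \<in> D \<and> s *\<^sub>R J z = T z"
    by (intro real_adjoint_graph_iff[THEN iffD2] ballI)
  then have "norm (T z)^2 + s^2 * norm z^2 = 0"
    using norm_T_plus_J_squared[of z "- s"] by simp
  with assms(1) show "z = 0"
    by (simp add: add_nonneg_eq_0_iff)
qed

lemma range_T_plus_J:
  assumes "s \<noteq> 0"
  shows "\<exists>x\<in>D. T x + s *\<^sub>R J x = y"
proof -
  have "(\<lambda>x. T x + s *\<^sub>R J x) ` D = UNIV"
    using closed_subspace_eq_UNIV[OF closed_range_T_plus_J[OF assms] subspace_range_T_plus_J]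
      orthogonal_range_T_plus_J_eq_0[OF assms] by blast
  then have "y \<in> (\<lambda>x. T x + s *\<^sub>R J x) ` D" by simp
  then show ?thesis by blast
qed

lemma T_plus_J_injective:
  assumes "x \<in> D" "x' \<in> D" "s \<noteq> 0" "T x + s *\<^sub>R J x = T x' + s *\<^sub>R J x'"
  shows "x = x'"
proof -
  have "\<bar>s\<bar> * norm (x - x') \<le> 0"
    using norm_le_T_plus_J[OF diff_mem_domain[OF assms(1,2)], of s] assms
    by (simp add: T_diff algebra_simps)
  with assms(3) show ?thesis by (simp add: mult_le_0_iff)
qed

lemma resolv_eqI:
  assumes "s \<noteq> 0" "x \<in> D" "T x + s *\<^sub>R J x = y"
  shows "resolv J D T s y = x"
  unfolding resolv_def by (rule the_equality) (use assms T_plus_J_injective in auto)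

lemma
  assumes "s \<noteq> 0"
  shows resolv_mem_domain: "resolv J D T s y \<in> D"
    and T_resolv: "T (resolv J D T s y) + s *\<^sub>R J (resolv J D T s y) = y"
proof -
  obtain x where "x \<in> D" "T x + s *\<^sub>R J x = y"
    using range_T_plus_J[OF assms] by blast
  with resolv_eqI[OF assms this] show "resolv J D T s y \<in> D"
    "T (resolv J D T s y) + s *\<^sub>R J (resolv J D T s y) = y" by simp_all
qed

lemma resolv_J:
  assumes "s \<noteq> 0"
  shows "resolv J D T s (J y) = J (resolv J D T s y)"
proof (rule resolv_eqI[OF assms])
  let ?x = "resolv J D T s y"
  show "J ?x \<in> D"
    by (simp add: J_mem_domain resolv_mem_domain[OF assms])
  have "T (J ?x) + s *\<^sub>R J (J ?x) = J (T ?x + s *\<^sub>R J ?x)"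
    by (simp add: T_J resolv_mem_domain[OF assms])
  then show "T (J ?x) + s *\<^sub>R J (J ?x) = J y"
    by (simp only: T_resolv[OF assms])
qed

lemma bounded_linear_resolv:
  assumes "s \<noteq> 0"
  shows "bounded_linear (resolv J D T s)"
proof (rule bounded_linear_intro[where K="1 / \<bar>s\<bar>"])
  show "resolv J D T s (a + b) = resolv J D T s a + resolv J D T s b" for a b
  proof (rule resolv_eqI[OF assms])
    let ?x = "resolv J D T s a" and ?x' = "resolv J D T s b"
    show "?x + ?x' \<in> D"
      by (simp add: add_mem_domain resolv_mem_domain[OF assms])
    have "T (?x + ?x') + s *\<^sub>R J (?x + ?x') = (T ?x + s *\<^sub>R J ?x) + (T ?x' + s *\<^sub>R J ?x')"
      by (simp add: T_add resolv_mem_domain[OF assms] algebra_simps)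
    then show "T (?x + ?x') + s *\<^sub>R J (?x + ?x') = a + b"
      by (simp only: T_resolv[OF assms])
  qed
  show "resolv J D T s (r *\<^sub>R a) = r *\<^sub>R resolv J D T s a" for r a
  proof (rule resolv_eqI[OF assms])
    let ?x = "resolv J D T s a"
    show "r *\<^sub>R ?x \<in> D"
      by (simp add: scaleR_mem_domain resolv_mem_domain[OF assms])
    have "T (r *\<^sub>R ?x) + s *\<^sub>R J (r *\<^sub>R ?x) = r *\<^sub>R (T ?x + s *\<^sub>R J ?x)"
      by (simp add: T_scaleR resolv_mem_domain[OF assms] scaleR_add_right)
    then show "T (r *\<^sub>R ?x) + s *\<^sub>R J (r *\<^sub>R ?x) = r *\<^sub>R a"
      by (simp only: T_resolv[OF assms])
  qed
  show "norm (resolv J D T s a) \<le> norm a * (1 / \<bar>s\<bar>)" for a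
  proof -
    have "\<bar>s\<bar> * norm (resolv J D T s a) \<le> norm a"
      using norm_le_T_plus_J[OF resolv_mem_domain[OF assms, of a], of s] T_resolv[OF assms, of a] by simp
    with assms show ?thesis by (simp add: field_simps)
  qed
qed

end

section \<open>The square root series\<close>

text \<open>Taylor coefficients of \<open>\<surd>(1 - z)\<close>.\<close>

fun sqrt_coeff :: "nat \<Rightarrow> real" where
  "sqrt_coeff 0 = 1"
| "sqrt_coeff (Suc n) = sqrt_coeff n * (real n - 1/2) / (real n + 1)"

lemma sqrt_coeff_gbinomial: "sqrt_coeff n = ((1/2::real) gchoose n) * (-1)^n"
proof (induction n)
  case (Suc n)
  have "(real n + 1) * ((1/2::real) gchoose (Suc n)) = (1/2 - real n) * ((1/2) gchoose n)"
    using gbinomial_mult_1[of "1/2::real" n] by (simp add: algebra_simps)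
  then have "((1/2::real) gchoose (Suc n)) = (1/2 - real n) * ((1/2) gchoose n) / (real n + 1)"
    by (simp add: eq_divide_eq mult.commute)
  with Suc show ?case by (simp add: algebra_simps)
qed simp

lemma sqrt_coeff_convolution:
  "(\<Sum>i\<le>k. sqrt_coeff i * sqrt_coeff (k - i)) = (if k = 0 then 1 else if k = 1 then -1 else 0)"
proof -
  have "(\<Sum>i\<le>k. sqrt_coeff i * sqrt_coeff (k - i))
      = (\<Sum>i=0..k. (((1/2::real) gchoose i) * ((1/2) gchoose (k - i))) * (-1)^k)"
    unfolding atMost_atLeast0
  proof (rule sum.cong[OF refl])
    fix i assume "i \<in> {0..k}"
    then have "(-1::real)^i * (-1)^(k-i) = (-1)^k"
      by (simp flip: power_add)
    moreover have "sqrt_coeff i * sqrt_coeff (k - i)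
        = (((1/2::real) gchoose i) * ((1/2) gchoose (k - i))) * ((-1)^i * (-1)^(k-i))"
      unfolding sqrt_coeff_gbinomial by (simp only: mult_ac)
    ultimately show "sqrt_coeff i * sqrt_coeff (k - i) = (((1/2::real) gchoose i) * ((1/2) gchoose (k - i))) * (-1)^k"
      by simp
  qed
  also have "\<dots> = ((1::real) gchoose k) * (-1)^k"
    using gbinomial_Vandermonde[of "1/2::real" "1/2" k] by (simp add: sum_distrib_right[symmetric])
  also have "\<dots> = (if k = 0 then 1 else if k = 1 then -1 else 0)"
  proof -
    have "((1::real) gchoose k) = real (1 choose k)"
      using binomial_gbinomial[of 1 k, where 'a=real] by simp
    then show ?thesis by (cases k) (auto simp: binomial_eq_0)
  qed
  finally show ?thesis .
qed

lemma sqrt_coeff_nonpos: "n \<ge> 1 \<Longrightarrow> sqrt_coeff n \<le> 0"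
proof (induction n)
  case (Suc n)
  show ?case
  proof (cases n)
    case (Suc m)
    then have "sqrt_coeff n \<le> 0" "real n - 1/2 \<ge> 0"
      using Suc.IH by simp_all
    then show ?thesis by (simp add: divide_nonpos_pos mult_nonpos_nonneg)
  qed simp
qed simp

lemma sum_sqrt_coeff: "(\<Sum>i\<le>m. sqrt_coeff i) = - 2 * (real m + 1) * sqrt_coeff (Suc m)"
proof (induction m)
  case (Suc m)
  then have "(\<Sum>i\<le>Suc m. sqrt_coeff i) = - 2 * (real m + 1) * sqrt_coeff (Suc m) + sqrt_coeff (Suc m)"
    by (simp del: sqrt_coeff.simps)
  also have "\<dots> = - 2 * (real (Suc m) + 1) * sqrt_coeff (Suc (Suc m))"
    unfolding sqrt_coeff.simps(2)[of "Suc m"] by (simp add: field_simps del: sqrt_coeff.simps)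
  finally show ?case .
qed simp

lemma sum_sqrt_coeff_nonneg: "0 \<le> (\<Sum>i\<le>m. sqrt_coeff i)"
  unfolding sum_sqrt_coeff using sqrt_coeff_nonpos[of "Suc m"]
  by (simp add: mult_nonpos_nonpos del: sqrt_coeff.simps)

lemma summable_abs_sqrt_coeff: "summable (\<lambda>n. \<bar>sqrt_coeff n\<bar>)"
proof (rule bounded_imp_summable[where B=2])
  have "(\<Sum>i\<le>m. \<bar>sqrt_coeff i\<bar>) = 2 - (\<Sum>i\<le>m. sqrt_coeff i)" for m
  proof (induction m)
    case (Suc m)
    then show ?case using sqrt_coeff_nonpos[of "Suc m"] by (simp del: sqrt_coeff.simps)
  qed simp
  then show "(\<Sum>i\<le>m. \<bar>sqrt_coeff i\<bar>) \<le> 2" for m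
    using sum_sqrt_coeff_nonneg[of m] by simp
qed simp

lemma summable_sqrt_coeff: "summable sqrt_coeff"
  by (rule summable_norm_cancel) (simp add: summable_abs_sqrt_coeff)

lemma suminf_sqrt_coeff_nonneg: "0 \<le> suminf sqrt_coeff"
  using summable_LIMSEQ'[OF summable_sqrt_coeff] by (rule LIMSEQ_le_const) (use sum_sqrt_coeff_nonneg in auto)

definition sqrt_coeff_norm :: real where
  "sqrt_coeff_norm = (\<Sum>n. \<bar>sqrt_coeff n\<bar>)"

definition sqrt_coeff_tail :: "nat \<Rightarrow> real" where
  "sqrt_coeff_tail N = (\<Sum>n. \<bar>sqrt_coeff (n + N)\<bar>)"

lemma sqrt_coeff_norm_nonneg: "0 \<le> sqrt_coeff_norm"
  unfolding sqrt_coeff_norm_def by (simp add: suminf_nonneg summable_abs_sqrt_coeff)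

lemma sqrt_coeff_tail_nonneg: "0 \<le> sqrt_coeff_tail N"
  unfolding sqrt_coeff_tail_def
  by (intro suminf_nonneg summable_ignore_initial_segment summable_abs_sqrt_coeff) simp

lemma sqrt_coeff_tail_tendsto_0: "sqrt_coeff_tail \<longlonglongrightarrow> 0"
proof -
  have "(\<lambda>N. sqrt_coeff_norm - (\<Sum>n<N. \<bar>sqrt_coeff n\<bar>)) \<longlonglongrightarrow> sqrt_coeff_norm - sqrt_coeff_norm"
    unfolding sqrt_coeff_norm_def by (intro tendsto_intros summable_LIMSEQ summable_abs_sqrt_coeff)
  moreover have "sqrt_coeff_tail = (\<lambda>N. sqrt_coeff_norm - (\<Sum>n<N. \<bar>sqrt_coeff n\<bar>))"
    by (simp add: fun_eq_iff sqrt_coeff_tail_def sqrt_coeff_norm_def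
        suminf_minus_initial_segment[OF summable_abs_sqrt_coeff])
  ultimately show ?thesis by simp
qed

lemma abs_sqrt_coeff_off_triangle_tendsto_0:
  "(\<lambda>N. \<Sum>(m, n)\<in>{..<N} \<times> {..<N} - {(i, j). i + j < N}. \<bar>sqrt_coeff m\<bar> * \<bar>sqrt_coeff n\<bar>) \<longlonglongrightarrow> 0"
proof -
  let ?S = sqrt_coeff_norm
  have sub: "{(i, j). i + j < N} \<subseteq> {..<N} \<times> {..<N}" for N :: nat by auto
  have "(\<Sum>(m, n)\<in>{..<N} \<times> {..<N} - {(i, j). i + j < N}. \<bar>sqrt_coeff m\<bar> * \<bar>sqrt_coeff n\<bar>)
      = (\<Sum>m<N. \<bar>sqrt_coeff m\<bar>) * (\<Sum>m<N. \<bar>sqrt_coeff m\<bar>)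
        - (\<Sum>k<N. \<Sum>i\<le>k. \<bar>sqrt_coeff i\<bar> * \<bar>sqrt_coeff (k - i)\<bar>)" for N
  proof -
    have "(\<Sum>(m, n)\<in>{..<N} \<times> {..<N}. \<bar>sqrt_coeff m\<bar> * \<bar>sqrt_coeff n\<bar>)
        = (\<Sum>m<N. \<bar>sqrt_coeff m\<bar>) * (\<Sum>m<N. \<bar>sqrt_coeff m\<bar>)"
      by (simp add: sum_product sum.cartesian_product)
    moreover have "(\<Sum>(m, n)\<in>{(i, j). i + j < N}. \<bar>sqrt_coeff m\<bar> * \<bar>sqrt_coeff n\<bar>)
        = (\<Sum>k<N. \<Sum>i\<le>k. \<bar>sqrt_coeff i\<bar> * \<bar>sqrt_coeff (k - i)\<bar>)"
      by (rule sum.triangle_reindex)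
    ultimately show ?thesis
      using sum.subset_diff[OF sub, where g="\<lambda>(m, n). \<bar>sqrt_coeff m\<bar> * \<bar>sqrt_coeff n\<bar>"] by simp
  qed
  moreover have "(\<lambda>N. (\<Sum>m<N. \<bar>sqrt_coeff m\<bar>) * (\<Sum>m<N. \<bar>sqrt_coeff m\<bar>)
        - (\<Sum>k<N. \<Sum>i\<le>k. \<bar>sqrt_coeff i\<bar> * \<bar>sqrt_coeff (k - i)\<bar>)) \<longlonglongrightarrow> ?S * ?S - ?S * ?S"
    using Cauchy_product_sums[of "\<lambda>n. \<bar>sqrt_coeff n\<bar>" "\<lambda>n. \<bar>sqrt_coeff n\<bar>"] summable_abs_sqrt_coeff
    unfolding sqrt_coeff_norm_def by (intro tendsto_intros summable_LIMSEQ) (simp_all add: sums_def)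
  ultimately show ?thesis by simp
qed

locale symmetric_contraction =
  fixes X :: "'a::{real_inner,complete_space} \<Rightarrow> 'a"
  assumes bounded_linear: "bounded_linear X"
    and symmetric: "inner (X x) y = inner x (X y)"
    and norm_le: "norm (X x) \<le> norm x"
begin

lemma bounded_linear_funpow: "bounded_linear (X ^^ n)"
  by (induction n) (simp_all add: bounded_linear_ident bounded_linear_compose[OF bounded_linear])

lemma funpow_linear:
  "(X ^^ n) (x + y) = (X ^^ n) x + (X ^^ n) y"
  "(X ^^ n) (r *\<^sub>R x) = r *\<^sub>R (X ^^ n) x"
  "(X ^^ n) (sum f I) = (\<Sum>i\<in>I. (X ^^ n) (f i))"
  using bounded_linear_funpow[of n]
  by (simp_all add: bounded_linear.linear linear_add linear_scale linear_sum)

lemma norm_funpow_le: "norm ((X ^^ n) x) \<le> norm x"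
  by (induction n) (auto intro: order_trans[OF norm_le])

lemma funpow_commute: "(\<And>x. B (X x) = X (B x)) \<Longrightarrow> B ((X ^^ n) x) = (X ^^ n) (B x)"
  by (induction n) simp_all

lemma funpow_symmetric: "inner ((X ^^ n) x) y = inner x ((X ^^ n) y)"
proof (induction n arbitrary: y)
  case (Suc n)
  have "inner ((X ^^ Suc n) x) y = inner ((X ^^ n) x) (X y)"
    by (simp add: symmetric)
  also have "\<dots> = inner x ((X ^^ Suc n) y)"
    by (simp add: Suc.IH funpow_swap1)
  finally show ?case .
qed simp

definition sqrt_partial :: "nat \<Rightarrow> 'a \<Rightarrow> 'a" where
  "sqrt_partial N x = (\<Sum>n<N. sqrt_coeff n *\<^sub>R (X ^^ n) x)"

definition sqrt_one_minus :: "'a \<Rightarrow> 'a" where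
  "sqrt_one_minus x = (\<Sum>n. sqrt_coeff n *\<^sub>R (X ^^ n) x)"

lemma norm_sqrt_series_term: "norm (sqrt_coeff n *\<^sub>R (X ^^ n) x) \<le> \<bar>sqrt_coeff n\<bar> * norm x"
  using norm_funpow_le[of n x] by (simp add: mult_left_mono)

lemma summable_sqrt_series: "summable (\<lambda>n. sqrt_coeff n *\<^sub>R (X ^^ n) x)"
  using norm_sqrt_series_term summable_mult2[OF summable_abs_sqrt_coeff]
  by (rule summable_comparison_complete)

lemma sqrt_partial_tendsto: "(\<lambda>N. sqrt_partial N x) \<longlonglongrightarrow> sqrt_one_minus x"
  unfolding sqrt_partial_def sqrt_one_minus_def using summable_LIMSEQ[OF summable_sqrt_series] .

lemma norm_sqrt_one_minus_diff_partial:
  "norm (sqrt_one_minus x - sqrt_partial N x) \<le> sqrt_coeff_tail N * norm x"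
proof -
  have "sqrt_one_minus x - sqrt_partial N x = (\<Sum>n. sqrt_coeff (n + N) *\<^sub>R (X ^^ (n + N)) x)"
    using suminf_split_initial_segment[OF summable_sqrt_series, of x N]
    by (simp add: sqrt_one_minus_def sqrt_partial_def)
  also have "norm \<dots> \<le> (\<Sum>n. \<bar>sqrt_coeff (n + N)\<bar> * norm x)"
    using norm_sqrt_series_term summable_mult2[OF summable_ignore_initial_segment[OF summable_abs_sqrt_coeff]]
    by (rule norm_suminf_le_complete)
  also have "\<dots> = sqrt_coeff_tail N * norm x"
    unfolding sqrt_coeff_tail_def
    by (rule suminf_mult2[symmetric, OF summable_ignore_initial_segment[OF summable_abs_sqrt_coeff]])
  finally show ?thesis .
qed

lemma norm_sqrt_partial_le: "norm (sqrt_partial N x) \<le> sqrt_coeff_norm * norm x"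
proof -
  have "norm (sqrt_partial N x) \<le> (\<Sum>n<N. norm (sqrt_coeff n *\<^sub>R (X ^^ n) x))"
    unfolding sqrt_partial_def by (rule norm_sum)
  also have "\<dots> \<le> (\<Sum>n<N. \<bar>sqrt_coeff n\<bar> * norm x)"
    by (rule sum_mono) (rule norm_sqrt_series_term)
  also have "\<dots> \<le> sqrt_coeff_norm * norm x"
    unfolding sum_distrib_right[symmetric] sqrt_coeff_norm_def
    by (intro mult_right_mono sum_le_suminf summable_abs_sqrt_coeff) auto
  finally show ?thesis .
qed

lemma norm_sqrt_one_minus_le: "norm (sqrt_one_minus x) \<le> sqrt_coeff_norm * norm x"
  unfolding sqrt_one_minus_def sqrt_coeff_norm_def suminf_mult2[OF summable_abs_sqrt_coeff]
  using norm_sqrt_series_term summable_mult2[OF summable_abs_sqrt_coeff]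
  by (rule norm_suminf_le_complete)

lemma bounded_linear_sqrt_one_minus: "bounded_linear sqrt_one_minus"
proof (rule bounded_linear_intro[where K=sqrt_coeff_norm])
  show "sqrt_one_minus (x + y) = sqrt_one_minus x + sqrt_one_minus y" for x y
    using summable_sqrt_series[of x] summable_sqrt_series[of y]
    by (simp add: sqrt_one_minus_def funpow_linear scaleR_add_right suminf_add)
  show "sqrt_one_minus (r *\<^sub>R x) = r *\<^sub>R sqrt_one_minus x" for r x
    using summable_sqrt_series[of x]
    by (simp add: sqrt_one_minus_def funpow_linear suminf_scaleR_right mult.commute)
  show "norm (sqrt_one_minus x) \<le> norm x * sqrt_coeff_norm" for x
    using norm_sqrt_one_minus_le by (simp add: mult.commute)
qed

lemma sqrt_one_minus_commute:
  assumes "bounded_linear B" "\<And>x. B (X x) = X (B x)"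
  shows "B (sqrt_one_minus x) = sqrt_one_minus (B x)"
proof -
  interpret B: bounded_linear B by fact
  show ?thesis
    using B.suminf[OF summable_sqrt_series]
    by (simp add: sqrt_one_minus_def B.scale funpow_commute[where B=B, OF assms(2)])
qed

lemma sqrt_one_minus_symmetric: "inner (sqrt_one_minus x) y = inner x (sqrt_one_minus y)"
  using bounded_linear.suminf[OF bounded_linear_inner_left summable_sqrt_series[of x], of y]
    bounded_linear.suminf[OF bounded_linear_inner_right summable_sqrt_series[of y], of x]
  by (simp add: sqrt_one_minus_def funpow_symmetric)

lemma sqrt_one_minus_nonneg: "0 \<le> inner x (sqrt_one_minus x)"
proof -
  have "inner x (sqrt_one_minus x) = (\<Sum>n. inner x (sqrt_coeff n *\<^sub>R (X ^^ n) x))"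
    unfolding sqrt_one_minus_def
    using bounded_linear.suminf[OF bounded_linear_inner_right summable_sqrt_series[of x]] by simp
  also have "\<dots> \<ge> (\<Sum>n. sqrt_coeff n * norm x ^ 2)"
  proof (rule suminf_le)
    show "sqrt_coeff n * norm x ^ 2 \<le> inner x (sqrt_coeff n *\<^sub>R (X ^^ n) x)" for n
    proof (cases n)
      case (Suc m)
      have "inner x ((X ^^ n) x) \<le> norm x * norm x"
        using norm_cauchy_schwarz[of x "(X ^^ n) x"] norm_funpow_le[of n x]
        by (meson mult_left_mono norm_ge_zero order_trans)
      moreover have "sqrt_coeff n \<le> 0"
        using Suc by (intro sqrt_coeff_nonpos) simp
      ultimately show ?thesis by (simp add: mult_left_mono_neg power2_eq_square)
    qed (simp add: power2_norm_eq_inner)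
    show "summable (\<lambda>n. sqrt_coeff n * norm x ^ 2)"
      by (rule summable_mult2[OF summable_sqrt_coeff])
    show "summable (\<lambda>n. inner x (sqrt_coeff n *\<^sub>R (X ^^ n) x))"
      using bounded_linear.summable[OF bounded_linear_inner_right summable_sqrt_series[of x]] by simp
  qed
  also have "(\<Sum>n. sqrt_coeff n * norm x ^ 2) = suminf sqrt_coeff * norm x ^ 2"
    by (rule suminf_mult2[symmetric, OF summable_sqrt_coeff])
  moreover have "0 \<le> suminf sqrt_coeff * norm x ^ 2"
    using suminf_sqrt_coeff_nonneg by simp
  ultimately show ?thesis by linarith
qed

lemma sqrt_partial_squared:
  "sqrt_partial N (sqrt_partial N x)
     = (\<Sum>(m, n)\<in>{..<N} \<times> {..<N}. (sqrt_coeff m * sqrt_coeff n) *\<^sub>R (X ^^ (m + n)) x)"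
  by (simp add: sqrt_partial_def funpow_linear scaleR_sum_right funpow_add sum.cartesian_product)

lemma sqrt_partial_squared_triangle:
  assumes "N \<ge> 2"
  shows "(\<Sum>(m, n)\<in>{(i, j). i + j < N}. (sqrt_coeff m * sqrt_coeff n) *\<^sub>R (X ^^ (m + n)) x) = x - X x"
proof -
  have "(\<Sum>(m, n)\<in>{(i, j). i + j < N}. (sqrt_coeff m * sqrt_coeff n) *\<^sub>R (X ^^ (m + n)) x)
      = (\<Sum>k<N. (\<Sum>i\<le>k. sqrt_coeff i * sqrt_coeff (k - i)) *\<^sub>R (X ^^ k) x)"
    by (simp add: sum.triangle_reindex scaleR_sum_left)
  also have "\<dots> = (\<Sum>k<2. (\<Sum>i\<le>k. sqrt_coeff i * sqrt_coeff (k - i)) *\<^sub>R (X ^^ k) x)"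
    using assms by (intro sum.mono_neutral_right) (auto simp: sqrt_coeff_convolution)
  also have "\<dots> = x - X x"
    by (simp add: numeral_2_eq_2 sqrt_coeff_convolution)
  finally show ?thesis .
qed

lemma norm_sqrt_product_term:
  "norm ((sqrt_coeff m * sqrt_coeff n) *\<^sub>R (X ^^ (m + n)) x) \<le> \<bar>sqrt_coeff m\<bar> * \<bar>sqrt_coeff n\<bar> * norm x"
  using norm_funpow_le[of "m + n" x] by (simp add: abs_mult mult_left_mono)

lemma sqrt_partial_squared_tendsto: "(\<lambda>N. sqrt_partial N (sqrt_partial N x)) \<longlonglongrightarrow> x - X x"
proof -
  let ?F = "\<lambda>(m, n). (sqrt_coeff m * sqrt_coeff n) *\<^sub>R (X ^^ (m + n)) x"
  let ?e = "\<lambda>N. \<Sum>(m, n)\<in>{..<N} \<times> {..<N} - {(i, j). i + j < N}. \<bar>sqrt_coeff m\<bar> * \<bar>sqrt_coeff n\<bar>"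
  have bound: "norm (sqrt_partial N (sqrt_partial N x) - (x - X x)) \<le> ?e N * norm x" if "N \<ge> 2" for N
  proof -
    have sub: "{(i, j). i + j < N} \<subseteq> {..<N} \<times> {..<N}"
      by auto
    have "sqrt_partial N (sqrt_partial N x) - (x - X x) = (\<Sum>p\<in>{..<N} \<times> {..<N} - {(i, j). i + j < N}. ?F p)"
      using sum.subset_diff[OF sub, where g="?F"]
      by (simp add: sqrt_partial_squared sqrt_partial_squared_triangle[OF that])
    also have "norm \<dots> \<le> (\<Sum>p\<in>{..<N} \<times> {..<N} - {(i, j). i + j < N}. norm (?F p))"
      by (rule norm_sum)
    also have "\<dots> \<le> (\<Sum>(m, n)\<in>{..<N} \<times> {..<N} - {(i, j). i + j < N}. \<bar>sqrt_coeff m\<bar> * \<bar>sqrt_coeff n\<bar> * norm x)"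
      by (rule sum_mono) (simp only: case_prod_beta norm_sqrt_product_term)
    also have "\<dots> = ?e N * norm x"
      by (simp add: sum_distrib_right case_prod_beta)
    finally show ?thesis .
  qed
  have "eventually (\<lambda>N. norm (sqrt_partial N (sqrt_partial N x) - (x - X x)) \<le> ?e N * norm x) sequentially"
    by (rule eventually_sequentiallyI[of 2]) (rule bound)
  moreover have "(\<lambda>N. ?e N * norm x) \<longlonglongrightarrow> 0"
    by (rule tendsto_mult_left_zero[OF abs_sqrt_coeff_off_triangle_tendsto_0])
  ultimately have "(\<lambda>N. sqrt_partial N (sqrt_partial N x) - (x - X x)) \<longlonglongrightarrow> 0"
    by (rule Lim_null_comparison)
  then show ?thesis
    by (rule LIM_zero_cancel)
qed

lemma sqrt_one_minus_squared: "sqrt_one_minus (sqrt_one_minus x) = x - X x"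
proof (rule LIMSEQ_unique[OF _ sqrt_partial_squared_tendsto])
  let ?S = sqrt_coeff_norm and ?t = sqrt_coeff_tail
  let ?b = "\<lambda>N. ?S * (?t N * norm x) + ?t N * (?S * norm x)"
  have "norm (sqrt_one_minus (sqrt_one_minus x) - sqrt_partial N (sqrt_partial N x)) \<le> ?b N" for N
  proof -
    have eq: "sqrt_one_minus (sqrt_one_minus x) - sqrt_partial N (sqrt_partial N x)
        = sqrt_one_minus (sqrt_one_minus x - sqrt_partial N x)
          + (sqrt_one_minus (sqrt_partial N x) - sqrt_partial N (sqrt_partial N x))"
      by (simp add: linear_diff[OF bounded_linear.linear[OF bounded_linear_sqrt_one_minus]])
    have "norm (sqrt_one_minus (sqrt_one_minus x - sqrt_partial N x)) \<le> ?S * (?t N * norm x)"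
      using norm_sqrt_one_minus_le[of "sqrt_one_minus x - sqrt_partial N x"]
        mult_left_mono[OF norm_sqrt_one_minus_diff_partial[of x N] sqrt_coeff_norm_nonneg]
      by linarith
    moreover have "norm (sqrt_one_minus (sqrt_partial N x) - sqrt_partial N (sqrt_partial N x)) \<le> ?t N * (?S * norm x)"
      using norm_sqrt_one_minus_diff_partial[of "sqrt_partial N x" N]
        mult_left_mono[OF norm_sqrt_partial_le[of N x] sqrt_coeff_tail_nonneg[of N]]
      by linarith
    ultimately show ?thesis
      unfolding eq
      using norm_triangle_ineq[of "sqrt_one_minus (sqrt_one_minus x - sqrt_partial N x)"
          "sqrt_one_minus (sqrt_partial N x) - sqrt_partial N (sqrt_partial N x)"]
      by linarith
  qed
  then have "eventually (\<lambda>N. norm (sqrt_partial N (sqrt_partial N x) - sqrt_one_minus (sqrt_one_minus x)) \<le> ?b N) sequentially"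
    by (simp add: norm_minus_commute)
  moreover have "?b \<longlonglongrightarrow> ?S * (0 * norm x) + 0 * (?S * norm x)"
    by (intro tendsto_intros sqrt_coeff_tail_tendsto_0)
  then have "?b \<longlonglongrightarrow> 0"
    by simp
  ultimately have "(\<lambda>N. sqrt_partial N (sqrt_partial N x) - sqrt_one_minus (sqrt_one_minus x)) \<longlonglongrightarrow> 0"
    by (rule Lim_null_comparison)
  then show "(\<lambda>N. sqrt_partial N (sqrt_partial N x)) \<longlonglongrightarrow> sqrt_one_minus (sqrt_one_minus x)"
    by (rule LIM_zero_cancel)
qed

lemma norm_diff_sqrt_one_minus_le: "norm (x - sqrt_one_minus x) \<le> norm (X x)"
proof -
  define y where "y = x - sqrt_one_minus x"
  have y: "y + sqrt_one_minus y = X x"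
    by (simp add: y_def sqrt_one_minus_squared linear_diff[OF bounded_linear.linear[OF bounded_linear_sqrt_one_minus]])
  have "norm y * norm y \<le> inner y y + inner y (sqrt_one_minus y)"
    using sqrt_one_minus_nonneg[of y] by (simp add: norm_eq_sqrt_inner)
  also have "\<dots> \<le> norm y * norm (X x)"
    using norm_cauchy_schwarz[of y "X x"] by (simp add: y flip: inner_add_right)
  finally show ?thesis
    unfolding y_def[symmetric] by (cases "norm y = 0") (auto simp: mult_le_cancel_left)
qed

end

lemma nonneg_operator_eq_0:
  fixes Q :: "'a::real_inner \<Rightarrow> 'a"
  assumes "bounded_linear Q" "\<And>x y. inner (Q x) y = inner x (Q y)" "\<And>x. 0 \<le> inner x (Q x)"
    and "inner y (Q y) = 0"
  shows "Q y = 0"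
proof (rule ccontr)
  interpret Q: bounded_linear Q by fact
  assume "Q y \<noteq> 0"
  define a where "a = inner (Q y) (Q y)"
  define c where "c = inner (Q y) (Q (Q y))"
  define t where "t = a / (c + 1)"
  have "a > 0" "c \<ge> 0"
    using \<open>Q y \<noteq> 0\<close> assms(3)[of "Q y"] by (simp_all add: a_def c_def)
  then have "t > 0"
    by (simp add: t_def)
  have "t * c = a * (c / (c + 1))"
    by (simp add: t_def)
  also have "\<dots> \<le> a"
    using \<open>a > 0\<close> \<open>c \<ge> 0\<close> by (intro mult_left_le) simp_all
  finally have "t * c < 2 * a"
    using \<open>a > 0\<close> by simp
  have "0 \<le> inner (y - t *\<^sub>R Q y) (Q (y - t *\<^sub>R Q y))"
    by (rule assms(3))
  also have "\<dots> = inner y (Q y) - 2 * t * a + t * t * c"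
    using assms(2)[of y "Q y"]
    by (simp add: Q.diff Q.scale inner_diff_left inner_diff_right a_def c_def inner_commute algebra_simps)
  finally have "0 \<le> t * (t * c - 2 * a)"
    using assms(4) by (simp add: algebra_simps)
  with \<open>t > 0\<close> \<open>t * c < 2 * a\<close> show False
    by (simp add: mult_le_0_iff zero_le_mult_iff)
qed

text \<open>Uniqueness of commuting nonnegative square roots: \<open>P - Q\<close> is annihilated by \<open>P + Q\<close>.\<close>

lemma nonneg_sqrt_unique:
  fixes P Q :: "'a::real_inner \<Rightarrow> 'a"
  assumes "bounded_linear P" "\<And>x y. inner (P x) y = inner x (P y)" "\<And>x. 0 \<le> inner x (P x)"
    and "bounded_linear Q" "\<And>x y. inner (Q x) y = inner x (Q y)" "\<And>x. 0 \<le> inner x (Q x)"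
    and "\<And>x. P (P x) = Q (Q x)" "\<And>x. P (Q x) = Q (P x)"
  shows "P x = Q x"
proof -
  interpret P: bounded_linear P by fact
  interpret Q: bounded_linear Q by fact
  define y where "y = P x - Q x"
  have "inner y (P y) + inner y (Q y) = inner y (P (P x) - Q (Q x))"
    by (simp add: y_def P.diff Q.diff assms(8) inner_diff_right inner_add_right flip: inner_add_right)
  then have "inner y (P y) + inner y (Q y) = 0"
    by (simp add: assms(7))
  then have "P y = 0" "Q y = 0"
    using assms(3)[of y] assms(6)[of y] nonneg_operator_eq_0[OF assms(1-3)] nonneg_operator_eq_0[OF assms(4-6)]
    by (simp_all add: add_nonneg_eq_0_iff)
  moreover have "inner (P x - Q x) y = inner x (P y) - inner x (Q y)"
    by (simp add: inner_diff_left assms(2,5))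
  ultimately have "inner y y = 0"
    by (simp add: y_def)
  then show ?thesis by (simp add: y_def)
qed

lemma (in complex_structure) psqrt_eqI:
  assumes Q: "bounded_linear Q" "\<And>x. Q (J x) = J (Q x)" "\<And>x y. inner (Q x) y = inner x (Q y)"
      "\<And>x. 0 \<le> inner x (Q x)" "\<And>x. Q (Q x) = K x"
    and commute: "\<And>P x. bounded_linear P \<Longrightarrow> (\<And>x. P (K x) = K (P x)) \<Longrightarrow> P (Q x) = Q (P x)"
  shows "psqrt J K = Q"
  unfolding psqrt_def
proof (rule the_equality)
  show "cbounded J J Q \<and> (\<forall>x y. cinner J (Q x) y = cinner J x (Q y)) \<and> (\<forall>x. 0 \<le> inner x (Q x))
      \<and> (\<forall>x. Q (Q x) = K x)"
    using Q by (simp add: cbounded_def cinner_eq_iff flip: Q(2))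
next
  fix P assume "cbounded J J P \<and> (\<forall>x y. cinner J (P x) y = cinner J x (P y)) \<and> (\<forall>x. 0 \<le> inner x (P x))
      \<and> (\<forall>x. P (P x) = K x)"
  then have P: "bounded_linear P" "\<And>x y. inner (P x) y = inner x (P y)" "\<And>x. 0 \<le> inner x (P x)"
      "\<And>x. P (P x) = K x"
    unfolding cbounded_def cinner_eq_iff by blast+
  have "P (K x) = K (P x)" for x
    by (simp flip: P(4))
  then have "P (Q x) = Q (P x)" for x
    using commute[OF P(1)] by blast
  then show "P = Q"
    by (intro ext nonneg_sqrt_unique[OF P(1-3) Q(1,3,4)]) (simp_all only: P(4) Q(5))
qed

section \<open>The regularisation \<open>\<Phi>\<^sub>R\<close>\<close>

context selfadjoint
begin

lemma sq_plus_injective: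
  assumes "R \<noteq> 0" "b \<in> D" "T b \<in> D" "T (T b) + R^2 *\<^sub>R b = 0"
  shows "b = 0"
proof -
  have "0 = inner (T (T b) + R^2 *\<^sub>R b) b"
    using assms(4) by simp
  also have "\<dots> = inner (T b) (T b) + R^2 * inner b b"
    using T_symmetric[OF assms(3,2)] by (simp add: inner_add_left)
  finally have "R^2 * inner b b = 0"
    by (metis add_nonneg_eq_0_iff inner_ge_zero mult_nonneg_nonneg zero_le_power2)
  with assms(1) show ?thesis by simp
qed

lemma sq_inv_eqI:
  assumes "R \<noteq> 0" "b \<in> D" "T b \<in> D" "T (T b) + R^2 *\<^sub>R b = y"
  shows "sq_inv D T R y = b"
  unfolding sq_inv_def
proof (rule the_equality)
  fix b' assume b': "b' \<in> D \<and> T b' \<in> D \<and> T (T b') + R^2 *\<^sub>R b' = y"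
  have "b' - b = 0"
  proof (rule sq_plus_injective[OF assms(1)])
    show "b' - b \<in> D" "T (b' - b) \<in> D"
      using assms b' by (simp_all add: diff_mem_domain T_diff)
    show "T (T (b' - b)) + R^2 *\<^sub>R (b' - b) = 0"
      using assms b' by (simp add: diff_mem_domain T_diff algebra_simps)
  qed
  then show "b' = b" by simp
qed (use assms in blast)

lemma sq_plus_surjective:
  assumes "R \<noteq> 0"
  shows "\<exists>b. b \<in> D \<and> T b \<in> D \<and> T (T b) + R^2 *\<^sub>R b = y"
proof -
  \<comment> \<open>\<open>T\<^sup>2 + R\<^sup>2 = (T - i R) (T + i R)\<close>\<close>
  define u where "u = resolv J D T R y"
  define b where "b = resolv J D T (- R) u"
  have u: "u \<in> D" "T u + R *\<^sub>R J u = y"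
    using assms by (simp_all add: u_def resolv_mem_domain T_resolv)
  have b: "b \<in> D" "T b = u + R *\<^sub>R J b"
    using assms T_resolv[of "- R" u] by (simp_all add: b_def resolv_mem_domain algebra_simps)
  have "T b \<in> D"
    using u b by (simp add: add_mem_domain scaleR_mem_domain J_mem_domain)
  moreover have "T (T b) = T u + R *\<^sub>R J u - R^2 *\<^sub>R b"
    using u b by (simp add: T_add T_scaleR T_J scaleR_mem_domain J_mem_domain power2_eq_square algebra_simps)
  ultimately show ?thesis
    using u b by auto
qed

lemma
  assumes "R \<noteq> 0"
  shows sq_inv_mem_domain: "sq_inv D T R y \<in> D"
    and T_sq_inv_mem_domain: "T (sq_inv D T R y) \<in> D"
    and T_T_sq_inv: "T (T (sq_inv D T R y)) + R^2 *\<^sub>R sq_inv D T R y = y"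
  using sq_plus_surjective[OF assms, of y] sq_inv_eqI[OF assms] by auto

lemma norm_T_T_plus_sq:
  assumes "b \<in> D" "T b \<in> D"
  shows "norm (T (T b) + R^2 *\<^sub>R b)^2 = norm (T (T b))^2 + 2 * R^2 * norm (T b)^2 + R^2 * R^2 * norm b^2"
  unfolding power2_norm_eq_inner using T_symmetric[OF assms(2,1)]
  by (simp add: inner_add_left inner_add_right inner_commute algebra_simps)

lemma
  assumes "R \<noteq> 0"
  shows norm_sq_inv_le: "R^2 * norm (sq_inv D T R y) \<le> norm y"
    and norm_T_T_sq_inv_le: "norm (T (T (sq_inv D T R y))) \<le> norm y"
    and norm_T_sq_inv_le: "\<bar>R\<bar> * norm (T (sq_inv D T R y)) \<le> norm y"
proof -
  let ?b = "sq_inv D T R y"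
  have y: "norm y^2 = norm (T (T ?b))^2 + 2 * R^2 * norm (T ?b)^2 + R^2 * R^2 * norm ?b^2"
    using norm_T_T_plus_sq[OF sq_inv_mem_domain[OF assms, of y] T_sq_inv_mem_domain[OF assms, of y], of R]
    by (simp add: T_T_sq_inv[OF assms])
  have "(R^2 * norm ?b)^2 \<le> norm y^2"
    unfolding y by (simp add: power_mult_distrib power2_eq_square)
  then show "R^2 * norm ?b \<le> norm y"
    by (rule power2_le_imp_le) simp
  have "norm (T (T ?b))^2 \<le> norm y^2"
    unfolding y by simp
  then show "norm (T (T ?b)) \<le> norm y"
    by (rule power2_le_imp_le) simp
  have "(\<bar>R\<bar> * norm (T ?b))^2 \<le> norm y^2"
    unfolding y by (simp add: power_mult_distrib)
  then show "\<bar>R\<bar> * norm (T ?b) \<le> norm y"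
    by (rule power2_le_imp_le) simp
qed

lemma bounded_linear_sq_inv:
  assumes "R \<noteq> 0"
  shows "bounded_linear (sq_inv D T R)"
proof (rule bounded_linear_intro[where K="1 / R^2"])
  note sq_inv = sq_inv_mem_domain[OF assms] T_sq_inv_mem_domain[OF assms] T_T_sq_inv[OF assms]
  show "sq_inv D T R (x + y) = sq_inv D T R x + sq_inv D T R y" for x y
    using sq_inv[of x] sq_inv[of y]
    by (intro sq_inv_eqI[OF assms]) (simp_all add: add_mem_domain T_add algebra_simps)
  show "sq_inv D T R (r *\<^sub>R x) = r *\<^sub>R sq_inv D T R x" for r x
  proof (rule sq_inv_eqI[OF assms])
    let ?b = "sq_inv D T R x"
    show "r *\<^sub>R ?b \<in> D" "T (r *\<^sub>R ?b) \<in> D"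
      using sq_inv[of x] by (simp_all add: scaleR_mem_domain T_scaleR)
    have "T (T (r *\<^sub>R ?b)) + R^2 *\<^sub>R (r *\<^sub>R ?b) = r *\<^sub>R (T (T ?b) + R^2 *\<^sub>R ?b)"
      using sq_inv(1,2)[of x] by (simp add: scaleR_mem_domain T_scaleR scaleR_add_right)
    then show "T (T (r *\<^sub>R ?b)) + R^2 *\<^sub>R (r *\<^sub>R ?b) = r *\<^sub>R x"
      by (simp only: T_T_sq_inv[OF assms])
  qed
  show "norm (sq_inv D T R x) \<le> norm x * (1 / R^2)" for x
    using norm_sq_inv_le[OF assms, of x] assms by (simp add: field_simps)
qed

lemma sq_inv_J:
  assumes "R \<noteq> 0"
  shows "sq_inv D T R (J y) = J (sq_inv D T R y)"
  using sq_inv_mem_domain[OF assms] T_sq_inv_mem_domain[OF assms] T_T_sq_inv[OF assms, of y]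
  by (intro sq_inv_eqI[OF assms]) (simp_all add: J_mem_domain T_J flip: J_add J_scaleR)

lemma sq_inv_symmetric:
  assumes "R \<noteq> 0"
  shows "inner (sq_inv D T R x) y = inner x (sq_inv D T R y)"
proof -
  let ?a = "sq_inv D T R x" and ?b = "sq_inv D T R y"
  note a = sq_inv_mem_domain[OF assms, of x] T_sq_inv_mem_domain[OF assms, of x]
  note b = sq_inv_mem_domain[OF assms, of y] T_sq_inv_mem_domain[OF assms, of y]
  have "inner ?a y = inner ?a (T (T ?b) + R^2 *\<^sub>R ?b)"
    by (simp add: T_T_sq_inv[OF assms])
  also have "\<dots> = inner (T (T ?a) + R^2 *\<^sub>R ?a) ?b"
    using T_symmetric[OF a(1) b(2)] T_symmetric[OF a(2) b(1)]
    by (simp add: inner_add_left inner_add_right)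
  also have "\<dots> = inner x ?b"
    by (simp add: T_T_sq_inv[OF assms])
  finally show ?thesis .
qed

lemma sq_inv_T:
  assumes "R \<noteq> 0" "x \<in> D"
  shows "sq_inv D T R (T x) = T (sq_inv D T R x)"
proof (rule sq_inv_eqI[OF assms(1)])
  have TT: "T (T (sq_inv D T R x)) = x - R^2 *\<^sub>R sq_inv D T R x"
    using T_T_sq_inv[OF assms(1), of x] by (simp add: algebra_simps)
  show "T (sq_inv D T R x) \<in> D"
    by (rule T_sq_inv_mem_domain[OF assms(1)])
  show "T (T (sq_inv D T R x)) \<in> D"
    unfolding TT using assms by (simp add: diff_mem_domain scaleR_mem_domain sq_inv_mem_domain)
  show "T (T (T (sq_inv D T R x))) + R^2 *\<^sub>R T (sq_inv D T R x) = T x"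
    unfolding TT using assms by (simp add: T_diff T_scaleR scaleR_mem_domain sq_inv_mem_domain)
qed

text \<open>\<open>sq_ratio R = T\<^sup>2 (T\<^sup>2 + R\<^sup>2)\<^sup>-\<^sup>1\<close>, and \<open>\<Phi>\<^sub>R = (I - sq_ratio R)\<^sup>1\<^sup>/\<^sup>2\<close>.\<close>

definition sq_ratio :: "real \<Rightarrow> 'a \<Rightarrow> 'a" where
  "sq_ratio R y = y - R^2 *\<^sub>R sq_inv D T R y"

lemma sq_ratio_eq: "R \<noteq> 0 \<Longrightarrow> sq_ratio R y = T (T (sq_inv D T R y))"
  using T_T_sq_inv[of R y] by (simp add: sq_ratio_def algebra_simps)

lemma symmetric_contraction_sq_ratio:
  assumes "R \<noteq> 0"
  shows "symmetric_contraction (sq_ratio R)"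
proof (rule symmetric_contraction.intro)
  show "bounded_linear (sq_ratio R)"
    unfolding sq_ratio_def[abs_def]
    by (intro bounded_linear_sub bounded_linear_ident bounded_linear_compose[OF bounded_linear_scaleR_right]
        bounded_linear_sq_inv[OF assms])
  show "inner (sq_ratio R x) y = inner x (sq_ratio R y)" for x y
    by (simp add: sq_ratio_def inner_diff_left inner_diff_right sq_inv_symmetric[OF assms])
  show "norm (sq_ratio R x) \<le> norm x" for x
    unfolding sq_ratio_eq[OF assms] by (rule norm_T_T_sq_inv_le[OF assms])
qed

lemma sq_ratio_J: "R \<noteq> 0 \<Longrightarrow> sq_ratio R (J x) = J (sq_ratio R x)"
  by (simp add: sq_ratio_def sq_inv_J)

lemma
  assumes "R \<noteq> 0" "x \<in> D"
  shows sq_ratio_mem_domain: "sq_ratio R x \<in> D"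
    and T_sq_ratio: "T (sq_ratio R x) = sq_ratio R (T x)"
  using assms by (simp_all add: sq_ratio_def diff_mem_domain scaleR_mem_domain sq_inv_mem_domain
      T_diff T_scaleR sq_inv_T)

lemma norm_sq_ratio_le:
  assumes "R \<noteq> 0" "x \<in> D"
  shows "\<bar>R\<bar> * norm (sq_ratio R x) \<le> norm (T x)"
  using norm_T_sq_inv_le[OF assms(1), of "T x"] by (simp add: sq_ratio_eq[OF assms(1)] sq_inv_T[OF assms])

abbreviation Phi :: "real \<Rightarrow> 'a \<Rightarrow> 'a" where
  "Phi R \<equiv> PhiR J D T R"

lemma Phi_eq_sqrt_one_minus:
  assumes "R > 0"
  shows "Phi R = symmetric_contraction.sqrt_one_minus (sq_ratio R)"
proof -
  have R: "R \<noteq> 0" using assms by simp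
  interpret X: symmetric_contraction "sq_ratio R"
    by (rule symmetric_contraction_sq_ratio[OF R])
  define Q where "Q x = (1 / R) *\<^sub>R X.sqrt_one_minus x" for x
  have "psqrt J (sq_inv D T R) = Q"
  proof (rule psqrt_eqI)
    show "bounded_linear Q"
      unfolding Q_def[abs_def]
      by (rule bounded_linear_compose[OF bounded_linear_scaleR_right X.bounded_linear_sqrt_one_minus])
    show "Q (J x) = J (Q x)" for x
      using X.sqrt_one_minus_commute[OF bounded_linear_J sq_ratio_J[OF R, symmetric]] by (simp add: Q_def)
    show "inner (Q x) y = inner x (Q y)" for x y
      by (simp add: Q_def X.sqrt_one_minus_symmetric)
    show "0 \<le> inner x (Q x)" for x
      using X.sqrt_one_minus_nonneg[of x] assms by (simp add: Q_def)
    show "Q (Q x) = sq_inv D T R x" for x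
      using X.sqrt_one_minus_squared[of x] R
      by (simp add: Q_def linear_scale[OF bounded_linear.linear[OF X.bounded_linear_sqrt_one_minus]]
          sq_ratio_def power2_eq_square)
    fix P x assume P: "bounded_linear P" "\<And>x. P (sq_inv D T R x) = sq_inv D T R (P x)"
    interpret P: bounded_linear P by fact
    have "P (sq_ratio R x) = sq_ratio R (P x)" for x
      by (simp add: sq_ratio_def P.diff P.scale P(2))
    then have comm: "P (X.sqrt_one_minus x) = X.sqrt_one_minus (P x)" for x
      by (rule X.sqrt_one_minus_commute[OF P(1)])
    show "P (Q x) = Q (P x)"
      unfolding Q_def P.scale comm ..
  qed
  then show ?thesis
    using assms by (simp add: PhiR_def Q_def fun_eq_iff)
qed

lemma
  assumes "R > 0"
  shows bounded_linear_Phi: "bounded_linear (Phi R)"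
    and Phi_J: "Phi R (J x) = J (Phi R x)"
    and Phi_symmetric: "inner (Phi R x) y = inner x (Phi R y)"
    and Phi_Phi: "Phi R (Phi R x) = R^2 *\<^sub>R sq_inv D T R x"
    and norm_diff_Phi_le: "norm (x - Phi R x) \<le> norm (sq_ratio R x)"
proof -
  have R: "R \<noteq> 0" using assms by simp
  interpret X: symmetric_contraction "sq_ratio R"
    by (rule symmetric_contraction_sq_ratio[OF R])
  note Phi = Phi_eq_sqrt_one_minus[OF assms]
  show "bounded_linear (Phi R)"
    unfolding Phi by (rule X.bounded_linear_sqrt_one_minus)
  show "Phi R (J x) = J (Phi R x)"
    unfolding Phi using X.sqrt_one_minus_commute[OF bounded_linear_J sq_ratio_J[OF R, symmetric]] by simp
  show "inner (Phi R x) y = inner x (Phi R y)"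
    unfolding Phi by (rule X.sqrt_one_minus_symmetric)
  show "Phi R (Phi R x) = R^2 *\<^sub>R sq_inv D T R x"
    unfolding Phi X.sqrt_one_minus_squared by (simp add: sq_ratio_def)
  show "norm (x - Phi R x) \<le> norm (sq_ratio R x)"
    unfolding Phi by (rule X.norm_diff_sqrt_one_minus_le)
qed

lemma
  assumes "R > 0" "x \<in> D"
  shows Phi_preserves_domain: "Phi R x \<in> D"
    and T_Phi: "T (Phi R x) = Phi R (T x)"
proof -
  have R: "R \<noteq> 0" using assms by simp
  interpret X: symmetric_contraction "sq_ratio R"
    by (rule symmetric_contraction_sq_ratio[OF R])
  have funpow: "(sq_ratio R ^^ n) y \<in> D \<and> T ((sq_ratio R ^^ n) y) = (sq_ratio R ^^ n) (T y)" if "y \<in> D" for n y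
    by (induction n) (simp_all add: that sq_ratio_mem_domain[OF R] T_sq_ratio[OF R])
  have partial: "X.sqrt_partial N x \<in> D" "T (X.sqrt_partial N x) = X.sqrt_partial N (T x)" for N
    using funpow[OF assms(2)]
    by (simp_all add: X.sqrt_partial_def sum_mem_domain T_sum scaleR_mem_domain T_scaleR)
  have "X.sqrt_one_minus x \<in> D \<and> T (X.sqrt_one_minus x) = X.sqrt_one_minus (T x)"
    using closed_graph[OF partial(1) X.sqrt_partial_tendsto] X.sqrt_partial_tendsto[of "T x"]
    by (simp add: partial(2))
  then show "Phi R x \<in> D" "T (Phi R x) = Phi R (T x)"
    by (simp_all add: Phi_eq_sqrt_one_minus[OF assms(1)])
qed

lemma norm_T_Phi_le_on_domain:
  assumes "R > 0" "x \<in> D"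
  shows "norm (T (Phi R x)) \<le> R * norm x"
proof -
  have R: "R \<noteq> 0" using assms by simp
  have "norm (T (Phi R x))^2 = inner (Phi R (T (Phi R x))) (T x)"
    by (simp add: power2_norm_eq_inner T_Phi[OF assms] Phi_symmetric[OF assms(1)])
  also have "\<dots> = R^2 * inner (T (T (sq_inv D T R x))) x"
    using Phi_preserves_domain[OF assms] T_sq_inv_mem_domain[OF R] sq_inv_mem_domain[OF R] assms(2)
    by (simp add: T_Phi[OF assms(1), symmetric] Phi_Phi[OF assms(1)] T_scaleR T_symmetric)
  also have "\<dots> \<le> R^2 * (norm x * norm x)"
    using norm_cauchy_schwarz[of "sq_ratio R x" x] symmetric_contraction.norm_le[OF symmetric_contraction_sq_ratio[OF R], of x]
    by (intro mult_left_mono) (simp_all add: sq_ratio_eq[OF R, symmetric] inner_commute mult_right_mono order_trans)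
  finally have "norm (T (Phi R x))^2 \<le> (R * norm x)^2"
    by (simp add: power_mult_distrib power2_eq_square mult_ac)
  then show ?thesis
    by (rule power2_le_imp_le) (use assms(1) in simp)
qed

lemma
  assumes "R > 0"
  shows Phi_mem_domain: "Phi R x \<in> D"
    and norm_T_Phi_le: "norm (T (Phi R x)) \<le> R * norm x"
proof -
  interpret Phi: bounded_linear "Phi R" by (rule bounded_linear_Phi[OF assms])
  obtain xs where xs: "\<And>n. xs n \<in> D" "xs \<longlonglongrightarrow> x"
    using closure_domain closure_sequential by blast
  have "Cauchy (\<lambda>n. T (Phi R (xs n)))"
  proof (rule Cauchy_if_norm_diff_le[OF LIMSEQ_imp_Cauchy[OF xs(2)]])
    show "1 / R > 0" using assms by simp
    have "norm (T (Phi R (xs m)) - T (Phi R (xs n))) \<le> R * norm (xs m - xs n)" for m n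
      using norm_T_Phi_le_on_domain[OF assms diff_mem_domain[OF xs(1) xs(1)], of m n]
      by (simp add: Phi.diff T_diff Phi_preserves_domain[OF assms xs(1)])
    then show "1 / R * norm (T (Phi R (xs m)) - T (Phi R (xs n))) \<le> norm (xs m - xs n)" for m n
      using assms by (simp add: field_simps)
  qed
  then obtain z where z: "(\<lambda>n. T (Phi R (xs n))) \<longlonglongrightarrow> z"
    using Cauchy_convergent_iff convergent_def by blast
  note graph = closed_graph[OF Phi_preserves_domain[OF assms xs(1)] Phi.tendsto[OF xs(2)] z]
  show "Phi R x \<in> D"
    by (rule graph(1))
  have "norm z \<le> R * norm x"
    using tendsto_norm[OF z] tendsto_mult_left[OF tendsto_norm[OF xs(2)], of R] norm_T_Phi_le_on_domain[OF assms xs(1)]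
    by (intro LIMSEQ_le) auto
  then show "norm (T (Phi R x)) \<le> R * norm x"
    by (simp add: graph(2))
qed

lemma
  assumes "R > 0"
  shows bounded_linear_T_Phi: "bounded_linear (\<lambda>x. T (Phi R x))"
    and T_Phi_J: "T (Phi R (J x)) = J (T (Phi R x))"
    and T_Phi_symmetric: "inner (T (Phi R x)) y = inner x (T (Phi R y))"
proof -
  interpret Phi: bounded_linear "Phi R" by (rule bounded_linear_Phi[OF assms])
  show bl: "bounded_linear (\<lambda>x. T (Phi R x))"
  proof (rule bounded_linear_intro[where K=R])
    show "T (Phi R (x + y)) = T (Phi R x) + T (Phi R y)" for x y
      by (simp add: Phi.add T_add Phi_mem_domain[OF assms])
    show "T (Phi R (r *\<^sub>R x)) = r *\<^sub>R T (Phi R x)" for r x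
      by (simp add: Phi.scale T_scaleR Phi_mem_domain[OF assms])
    show "norm (T (Phi R x)) \<le> norm x * R" for x
      using norm_T_Phi_le[OF assms, of x] by (simp add: mult.commute)
  qed
  show "T (Phi R (J x)) = J (T (Phi R x))"
    by (simp add: Phi_J[OF assms] T_J Phi_mem_domain[OF assms])
  show "inner (T (Phi R x)) y = inner x (T (Phi R y))"
  proof (rule bounded_linear_eq_on_dense[OF closure_domain, where f="\<lambda>y. inner (T (Phi R x)) y"])
    show "bounded_linear (\<lambda>y. inner (T (Phi R x)) y)"
      by (rule bounded_linear_inner_right)
    show "bounded_linear (\<lambda>y. inner x (T (Phi R y)))"
      by (rule bounded_linear_compose[OF bounded_linear_inner_right bl])
    show "inner (T (Phi R x)) y = inner x (T (Phi R y))" if "y \<in> D" for y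
      using T_symmetric[OF Phi_mem_domain[OF assms] that]
      by (simp add: Phi_symmetric[OF assms] T_Phi[OF assms that])
  qed
qed

lemma norm_diff_Phi_le_norm:
  assumes "R > 0"
  shows "norm (x - Phi R x) \<le> norm x"
  using norm_diff_Phi_le[OF assms, of x] symmetric_contraction.norm_le[OF symmetric_contraction_sq_ratio, of R x] assms
  by simp

lemma norm_diff_Phi_le_T:
  assumes "R > 0" "x \<in> D"
  shows "R * norm (x - Phi R x) \<le> norm (T x)"
proof -
  have "R * norm (x - Phi R x) \<le> R * norm (sq_ratio R x)"
    using assms(1) by (intro mult_left_mono norm_diff_Phi_le) simp_all
  also have "\<dots> \<le> norm (T x)"
    using norm_sq_ratio_le[of R x] assms by simp
  finally show ?thesis .
qed

lemma Phi_tendsto: "((\<lambda>R. Phi R x) \<longlongrightarrow> x) at_top"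
proof (rule tendstoI)
  fix e :: real assume "e > 0"
  then obtain x' where "x' \<in> D" and x': "dist x' x < e / 2"
    using closure_approachable[of x D] closure_domain by (metis UNIV_I half_gt_zero)
  have "dist (Phi R x) x < e" if R: "R \<ge> max 1 (2 * norm (T x') / e + 1)" for R
  proof -
    have "R > 0" using R by simp
    interpret Phi: bounded_linear "Phi R" by (rule bounded_linear_Phi[OF \<open>R > 0\<close>])
    have "x - Phi R x = ((x - x') - Phi R (x - x')) + (x' - Phi R x')"
      by (simp add: Phi.diff)
    then have "norm (x - Phi R x) \<le> norm ((x - x') - Phi R (x - x')) + norm (x' - Phi R x')"
      by (metis norm_triangle_ineq)
    also have "\<dots> \<le> norm (x - x') + norm (T x') / R"
      using norm_diff_Phi_le_norm[OF \<open>R > 0\<close>, of "x - x'"] norm_diff_Phi_le_T[OF \<open>R > 0\<close> \<open>x' \<in> D\<close>] \<open>R > 0\<close>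
      by (simp add: pos_le_divide_eq mult.commute add_mono)
    also have "norm (T x') / R < e / 2"
      using R \<open>e > 0\<close> \<open>R > 0\<close> by (simp add: field_simps)
    finally show ?thesis
      using x' by (simp add: dist_norm norm_minus_commute)
  qed
  then show "eventually (\<lambda>R. dist (Phi R x) x < e) at_top"
    unfolding eventually_at_top_linorder by blast
qed

lemma T_Phi_tendsto:
  assumes "x \<in> D"
  shows "((\<lambda>R. T (Phi R x)) \<longlongrightarrow> T x) at_top"
proof -
  have "eventually (\<lambda>R. Phi R (T x) = T (Phi R x)) at_top"
    using eventually_gt_at_top[of 0] by eventually_elim (simp add: T_Phi[OF _ assms])
  with Phi_tendsto[of "T x"] show ?thesis
    by (rule tendsto_cong[THEN iffD1, rotated])
qed

end

section \<open>Self-adjointness from the range condition\<close>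

lemma complex_structure_prod:
  assumes "complex_structure J0" "complex_structure J1"
  shows "complex_structure (\<lambda>(v, w). (J0 v, J1 w))"
proof -
  interpret J0: complex_structure J0 by fact
  interpret J1: complex_structure J1 by fact
  show ?thesis
    unfolding complex_structure_def cstruct_def
    by (auto simp: linear_iff inner_prod_def case_prod_beta)
qed

lemma self_adjoint_cong:
  assumes "\<And>x. x \<in> D \<Longrightarrow> T x = T' x"
  shows "self_adjoint J D T \<longleftrightarrow> self_adjoint J D T'"
proof -
  have "{(y, z). \<forall>x\<in>D. cinner J (T x) y = cinner J x z} = {(y, z). \<forall>x\<in>D. cinner J (T' x) y = cinner J x z}"
    "{(x, T x) |x. x \<in> D} = {(x, T' x) |x. x \<in> D}"
    using assms by force+
  then show ?thesis
    by (simp add: self_adjoint_def)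
qed

lemma real_adjoint_in_graph_if_ranges:
  fixes J :: "'a::real_inner \<Rightarrow> 'a"
  assumes "complex_structure J"
    and sym: "\<And>x y. x \<in> D \<Longrightarrow> y \<in> D \<Longrightarrow> inner (T x) y = inner x (T y)"
    and range_plus: "\<And>y. \<exists>x\<in>D. T x + \<beta> *\<^sub>R J x = y"
    and range_minus: "\<And>y. \<exists>x\<in>D. T x - \<beta> *\<^sub>R J x = y"
    and adj: "\<forall>x\<in>D. inner (T x) y = inner x z"
  shows "y \<in> D \<and> z = T y"
proof -
  interpret complex_structure J by fact
  obtain q where q: "q \<in> D" "T q - \<beta> *\<^sub>R J q = z - \<beta> *\<^sub>R J y"
    using range_minus by blast
  obtain p where p: "p \<in> D" "T p + \<beta> *\<^sub>R J p = y - q"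
    using range_plus by blast
  have "inner (T p + \<beta> *\<^sub>R J p) (y - q) = inner p (z - \<beta> *\<^sub>R J y - (T q - \<beta> *\<^sub>R J q))"
    using adj p(1) sym[OF p(1) q(1)]
    by (simp add: inner_add_left inner_diff_right inner_J_left algebra_simps)
  then have "inner (y - q) (y - q) = 0"
    by (simp add: p(2) q(2))
  then have "y = q" by simp
  with q show ?thesis by (simp add: algebra_simps)
qed

lemma self_adjointI_range:
  fixes J :: "'a::real_inner \<Rightarrow> 'a"
  assumes "complex_structure J" "closure D = UNIV"
    and J_mem: "\<And>x. x \<in> D \<Longrightarrow> J x \<in> D" and T_J: "\<And>x. x \<in> D \<Longrightarrow> T (J x) = J (T x)"
    and sym: "\<And>x y. x \<in> D \<Longrightarrow> y \<in> D \<Longrightarrow> inner (T x) y = inner x (T y)"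
    and range_plus: "\<And>y. \<exists>x\<in>D. T x + \<beta> *\<^sub>R J x = y"
    and range_minus: "\<And>y. \<exists>x\<in>D. T x - \<beta> *\<^sub>R J x = y"
  shows "self_adjoint J D T"
  unfolding self_adjoint_def
proof (intro conjI assms(2) set_eqI iffI)
  interpret complex_structure J by fact
  fix yz assume "yz \<in> {(y, z). \<forall>x\<in>D. cinner J (T x) y = cinner J x z}"
  then obtain y z where "yz = (y, z)" "\<forall>x\<in>D. cinner J (T x) y = cinner J x z"
    by blast
  moreover from this(2) have "\<forall>x\<in>D. inner (T x) y = inner x z"
    by (simp add: cinner_eq_iff)
  ultimately show "yz \<in> {(x, T x) |x. x \<in> D}"
    using real_adjoint_in_graph_if_ranges[OF assms(1) sym range_plus range_minus] by blast
next
  interpret complex_structure J by fact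
  fix yz assume "yz \<in> {(x, T x) |x. x \<in> D}"
  then obtain y where "yz = (y, T y)" "y \<in> D"
    by blast
  moreover have "cinner J (T x) y = cinner J x (T y)" if "x \<in> D" for x
    using sym[OF that \<open>y \<in> D\<close>] sym[OF J_mem[OF that] \<open>y \<in> D\<close>] that by (simp add: cinner_eq_iff T_J)
  ultimately show "yz \<in> {(y, z). \<forall>x\<in>D. cinner J (T x) y = cinner J x z}"
    by simp
qed

lemma continuity_method_step:
  fixes L P :: "'a::real_vector \<Rightarrow> 'b::{real_normed_vector,complete_space}"
  assumes diff_mem: "\<And>u v. u \<in> D \<Longrightarrow> v \<in> D \<Longrightarrow> u - v \<in> D"
    and L_diff: "\<And>u v. u \<in> D \<Longrightarrow> v \<in> D \<Longrightarrow> L (u - v) = L u - L v"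
    and P_diff: "\<And>u v. u \<in> D \<Longrightarrow> v \<in> D \<Longrightarrow> P (u - v) = P u - P v"
    and bound: "\<And>v. v \<in> D \<Longrightarrow> norm (P v) \<le> K * norm (L v - t *\<^sub>R P v)"
    and surj: "\<And>h. \<exists>v\<in>D. L v - t *\<^sub>R P v = h"
    and close: "\<bar>s - t\<bar> * K \<le> 1/2"
  shows "\<exists>v\<in>D. L v - s *\<^sub>R P v = h"
proof -
  obtain inv where inv: "\<And>u. inv u \<in> D" "\<And>u. L (inv u) - t *\<^sub>R P (inv u) = u"
    using surj by metis
  \<comment> \<open>\<open>inv u\<close> solves \<open>L v - s P v = h\<close> exactly when \<open>u\<close> is a fixed point of the contraction \<open>F\<close>.\<close>
  define F where "F u = h + (s - t) *\<^sub>R P (inv u)" for u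
  have "dist (F u1) (F u2) \<le> 1/2 * dist u1 u2" for u1 u2
  proof -
    have "F u1 - F u2 = (s - t) *\<^sub>R P (inv u1 - inv u2)"
      by (simp add: F_def P_diff inv(1) scaleR_diff_right)
    moreover have "norm (P (inv u1 - inv u2)) \<le> K * norm (u1 - u2)"
    proof -
      have "L (inv u1 - inv u2) - t *\<^sub>R P (inv u1 - inv u2)
          = (L (inv u1) - t *\<^sub>R P (inv u1)) - (L (inv u2) - t *\<^sub>R P (inv u2))"
        by (simp add: L_diff P_diff inv(1) scaleR_diff_right)
      also have "\<dots> = u1 - u2"
        by (simp only: inv(2))
      finally have eq: "L (inv u1 - inv u2) - t *\<^sub>R P (inv u1 - inv u2) = u1 - u2" .
      show ?thesis
        using bound[OF diff_mem[OF inv(1)[of u1] inv(1)[of u2]]] unfolding eq .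
    qed
    ultimately have "dist (F u1) (F u2) \<le> (\<bar>s - t\<bar> * K) * norm (u1 - u2)"
      by (simp add: dist_norm mult.assoc mult_left_mono)
    also have "\<dots> \<le> 1/2 * norm (u1 - u2)"
      by (rule mult_right_mono[OF close]) simp
    finally show ?thesis by (simp add: dist_norm)
  qed
  then obtain u where "F u = u"
    using banach_fix_type[of "1/2" F] by auto
  then have "L (inv u) - s *\<^sub>R P (inv u) = h"
    using inv(2)[of u] by (simp add: F_def algebra_simps)
  with inv(1) show ?thesis by blast
qed

lemma continuity_method:
  fixes L P :: "'a::real_vector \<Rightarrow> 'b::{real_normed_vector,complete_space}"
  assumes diff_mem: "\<And>u v. u \<in> D \<Longrightarrow> v \<in> D \<Longrightarrow> u - v \<in> D"
    and L_diff: "\<And>u v. u \<in> D \<Longrightarrow> v \<in> D \<Longrightarrow> L (u - v) = L u - L v"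
    and P_diff: "\<And>u v. u \<in> D \<Longrightarrow> v \<in> D \<Longrightarrow> P (u - v) = P u - P v"
    and bound: "\<And>t v. 0 \<le> t \<Longrightarrow> t \<le> 1 \<Longrightarrow> v \<in> D \<Longrightarrow> norm (P v) \<le> K * norm (L v - t *\<^sub>R P v)"
    and surj: "\<And>h. \<exists>v\<in>D. L v = h"
  shows "\<exists>v\<in>D. L v - P v = h"
proof -
  define N :: nat where "N = nat \<lceil>2 * K\<rceil> + 1"
  have N: "real N > 0" "K / real N \<le> 1/2"
    by (simp_all add: N_def field_simps) linarith
  have "\<forall>h. \<exists>v\<in>D. L v - (real k / real N) *\<^sub>R P v = h" if "k \<le> N" for k
    using that
  proof (induction k)
    case 0
    then show ?case using surj by simp
  next
    case (Suc k)
    let ?t = "real k / real N" and ?s = "real (Suc k) / real N"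
    have t: "0 \<le> ?t" "?t \<le> 1"
      using Suc.prems N(1) by (simp_all add: field_simps)
    have "\<bar>?s - ?t\<bar> * K = K / real N"
      using N(1) by (simp add: field_simps)
    with N(2) have close: "\<bar>?s - ?t\<bar> * K \<le> 1/2"
      by simp
    have "\<forall>h. \<exists>v\<in>D. L v - ?t *\<^sub>R P v = h"
      using Suc by simp
    then show ?case
      using continuity_method_step[OF diff_mem L_diff P_diff bound[OF t] _ close] by blast
  qed
  from this[of N] N(1) show ?thesis by simp
qed

lemma norm_le_of_relative_bound:
  fixes l p :: "'a::real_normed_vector"
  assumes "0 \<le> \<delta>" "\<delta> < 1" "\<beta> > 0" "0 \<le> c" "0 \<le> t" "t \<le> 1"
    and p: "norm p \<le> \<delta> * norm l + c * V" and V: "\<beta> * V \<le> norm (l - t *\<^sub>R p)"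
  shows "norm p \<le> (\<delta> + c / \<beta>) / (1 - \<delta>) * norm (l - t *\<^sub>R p)"
proof -
  let ?q = "norm (l - t *\<^sub>R p)"
  have "norm l \<le> ?q + norm (t *\<^sub>R p)"
    using norm_triangle_ineq[of "l - t *\<^sub>R p" "t *\<^sub>R p"] by simp
  also have "norm (t *\<^sub>R p) \<le> norm p"
    using assms(5,6) by (simp add: mult_left_le_one_le)
  finally have "\<delta> * norm l \<le> \<delta> * ?q + \<delta> * norm p"
    using assms(1) by (simp add: mult_left_mono flip: distrib_left)
  moreover have "c * V \<le> c / \<beta> * ?q"
    using mult_left_mono[OF V, of "c / \<beta>"] assms(3,4) by simp
  ultimately have "(1 - \<delta>) * norm p \<le> (\<delta> + c / \<beta>) * ?q"
    using p by (simp add: algebra_simps)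
  with assms(2) show ?thesis
    by (simp add: pos_le_divide_eq mult.commute)
qed

section \<open>The coupled operator\<close>

locale coupling =
  A: selfadjoint J0 DA A + Om: selfadjoint J1 DO Om
  for J0 :: "'a::{real_inner,complete_space} \<Rightarrow> 'a" and DA A
    and J1 :: "'b::{real_inner,complete_space} \<Rightarrow> 'b" and DO Om +
  fixes Gam :: "'b \<Rightarrow> 'a"
  assumes Gam_add: "\<forall>\<phi>\<in>DO. \<forall>\<psi>\<in>DO. Gam (\<phi> + \<psi>) = Gam \<phi> + Gam \<psi>"
    and Gam_scale: "\<forall>\<phi>\<in>DO. \<forall>c. Gam (csc J1 c \<phi>) = csc J0 c (Gam \<phi>)"
    and Gam_bound: "\<exists>C. \<forall>\<phi>\<in>DO. (norm (Gam \<phi>))^2 \<le> C * (norm (Om \<phi> + J1 \<phi>))^2"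
    and G_lim: "\<forall>v\<in>DA. \<exists>g. ((\<lambda>R. Gam (PhiR J1 DO Om R
                      (badj J0 J1 (\<lambda>x. Gam (resolv J1 DO Om 1 x)) v))) \<longlongrightarrow> g) at_top"
    and G_bound: "\<exists>\<delta><1. \<exists>\<beta>>0. \<forall>v\<in>DA.
         norm (Lim at_top (\<lambda>R. Gam (PhiR J1 DO Om R
                      (badj J0 J1 (\<lambda>x. Gam (resolv J1 DO Om 1 x)) v))))
           \<le> \<delta> * norm (A v + \<beta> *\<^sub>R J0 v)"
begin

lemma Gam_plus: "\<phi> \<in> DO \<Longrightarrow> \<psi> \<in> DO \<Longrightarrow> Gam (\<phi> + \<psi>) = Gam \<phi> + Gam \<psi>"
  using Gam_add by blast

lemma Gam_scaleR: "\<phi> \<in> DO \<Longrightarrow> Gam (r *\<^sub>R \<phi>) = r *\<^sub>R Gam \<phi>"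
  using Gam_scale[rule_format, of \<phi> "complex_of_real r"] by (simp add: Om.csc_of_real A.csc_of_real)

lemma Gam_J: "\<phi> \<in> DO \<Longrightarrow> Gam (J1 \<phi>) = J0 (Gam \<phi>)"
  using Gam_scale[rule_format, of \<phi> \<i>] by (simp add: Om.csc_imaginary_unit A.csc_imaginary_unit)

definition S :: "'b \<Rightarrow> 'a" where
  "S x = Gam (resolv J1 DO Om 1 x)"

lemma Gam_eq_S: "\<phi> \<in> DO \<Longrightarrow> Gam \<phi> = S (Om \<phi> + J1 \<phi>)"
  unfolding S_def using Om.resolv_eqI[of 1 \<phi> "Om \<phi> + J1 \<phi>"] by simp

lemma cbounded_S: "cbounded J1 J0 S"
  unfolding cbounded_def
proof
  obtain C where C: "\<And>\<phi>. \<phi> \<in> DO \<Longrightarrow> (norm (Gam \<phi>))^2 \<le> C * (norm (Om \<phi> + J1 \<phi>))^2"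
    using Gam_bound by blast
  have resolv: "resolv J1 DO Om 1 x \<in> DO" "Om (resolv J1 DO Om 1 x) + J1 (resolv J1 DO Om 1 x) = x" for x
    using Om.resolv_mem_domain[of 1 x] Om.T_resolv[of 1 x] by simp_all
  show "bounded_linear S"
  proof (rule bounded_linear_intro[where K="sqrt \<bar>C\<bar>"])
    interpret R: bounded_linear "resolv J1 DO Om 1"
      by (rule Om.bounded_linear_resolv) simp
    show "S (x + y) = S x + S y" for x y
      by (simp add: S_def R.add Gam_plus resolv(1))
    show "S (r *\<^sub>R x) = r *\<^sub>R S x" for r x
      by (simp add: S_def R.scale Gam_scaleR resolv(1))
    show "norm (S x) \<le> norm x * sqrt \<bar>C\<bar>" for x
    proof (rule power2_le_imp_le)
      show "(norm (S x))^2 \<le> (norm x * sqrt \<bar>C\<bar>)^2"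
        using C[OF resolv(1), of x] abs_ge_self[of C] mult_right_mono[of C "\<bar>C\<bar>" "(norm x)^2"]
        by (simp add: S_def resolv(2) power_mult_distrib mult.commute)
    qed simp
  qed
  show "\<forall>x. S (J1 x) = J0 (S x)"
    by (simp add: S_def Om.resolv_J Gam_J Om.resolv_mem_domain)
qed

lemma bounded_linear_S: "bounded_linear S" and S_J: "S (J1 x) = J0 (S x)"
  using cbounded_S by (simp_all add: cbounded_def)

definition Sd :: "'a \<Rightarrow> 'b" where
  "Sd = badj J0 J1 S"

lemma is_adjoint_S_Sd: "is_adjoint S Sd" and cbounded_Sd: "cbounded J0 J1 Sd"
  unfolding Sd_def using badj_cbounded[OF A.complex_structure_axioms Om.complex_structure_axioms cbounded_S] by simp_all

lemma inner_S_Sd: "inner (S x) y = inner x (Sd y)"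
  using is_adjoint_S_Sd by (simp add: is_adjoint_def)

lemma bounded_linear_Sd: "bounded_linear Sd" and Sd_J: "Sd (J0 y) = J1 (Sd y)"
  using cbounded_Sd by (simp_all add: cbounded_def)

lemma Sd_diff: "Sd (u - v) = Sd u - Sd v"
  using linear_diff[OF bounded_linear.linear[OF bounded_linear_Sd]] .

lemma Gam_Phi_eq: "R > 0 \<Longrightarrow> Gam (Om.Phi R w) = S (Om (Om.Phi R w) + J1 (Om.Phi R w))"
  by (rule Gam_eq_S[OF Om.Phi_mem_domain])

lemma cbounded_Gam_Phi:
  assumes "R > 0"
  shows "cbounded J1 J0 (\<lambda>w. Gam (Om.Phi R w))"
  unfolding cbounded_def
proof
  have "bounded_linear (\<lambda>w. S (Om (Om.Phi R w) + J1 (Om.Phi R w)))"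
    by (intro bounded_linear_compose[OF bounded_linear_S] bounded_linear_add Om.bounded_linear_T_Phi[OF assms]
        bounded_linear_compose[OF Om.bounded_linear_J Om.bounded_linear_Phi[OF assms]])
  then show "bounded_linear (\<lambda>w. Gam (Om.Phi R w))"
    by (simp add: Gam_Phi_eq[OF assms])
  show "\<forall>w. Gam (Om.Phi R (J1 w)) = J0 (Gam (Om.Phi R w))"
    by (simp add: Om.Phi_J[OF assms] Gam_J Om.Phi_mem_domain[OF assms])
qed

lemma is_adjoint_Gam_Phi:
  assumes "R > 0"
  shows "is_adjoint (\<lambda>w. Gam (Om.Phi R w)) (\<lambda>v. Om (Om.Phi R (Sd v)) - J1 (Om.Phi R (Sd v)))"
  unfolding is_adjoint_def
proof (intro allI)
  fix w v
  have "inner (J1 (Om.Phi R w)) (Sd v) = - inner w (J1 (Om.Phi R (Sd v)))"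
    by (simp add: Om.inner_J_left Om.Phi_symmetric[OF assms] flip: Om.Phi_J[OF assms])
  then show "inner (Gam (Om.Phi R w)) v = inner w (Om (Om.Phi R (Sd v)) - J1 (Om.Phi R (Sd v)))"
    by (simp add: Gam_Phi_eq[OF assms] inner_S_Sd inner_add_left inner_diff_right Om.T_Phi_symmetric[OF assms])
qed

lemma badj_Gam_Phi:
  assumes "R > 0"
  shows "badj J0 J1 (\<lambda>w. Gam (Om.Phi R w)) = (\<lambda>v. Om (Om.Phi R (Sd v)) - J1 (Om.Phi R (Sd v)))"
  using cbounded_Gam_Phi[OF assms] is_adjoint_Gam_Phi[OF assms]
  by (intro badj_eqI[OF A.complex_structure_axioms Om.complex_structure_axioms]) (simp_all add: cbounded_def)

lemma Gam_Phi_tendsto: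
  assumes "\<phi> \<in> DO"
  shows "((\<lambda>R. Gam (Om.Phi R \<phi>)) \<longlongrightarrow> Gam \<phi>) at_top"
proof -
  have "((\<lambda>R. S (Om (Om.Phi R \<phi>) + J1 (Om.Phi R \<phi>))) \<longlongrightarrow> S (Om \<phi> + J1 \<phi>)) at_top"
    by (intro bounded_linear.tendsto[OF bounded_linear_S] tendsto_add Om.T_Phi_tendsto[OF assms]
        Om.tendsto_J Om.Phi_tendsto)
  moreover have "eventually (\<lambda>R. S (Om (Om.Phi R \<phi>) + J1 (Om.Phi R \<phi>)) = Gam (Om.Phi R \<phi>)) at_top"
    using eventually_gt_at_top[of 0] by eventually_elim (simp add: Gam_Phi_eq)
  ultimately show ?thesis
    by (simp add: Gam_eq_S[OF assms] tendsto_cong[THEN iffD1, rotated])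
qed

definition G :: "'a \<Rightarrow> 'a" where
  "G v = Lim at_top (\<lambda>R. Gam (Om.Phi R (Sd v)))"

lemma Gam_resolv_eq_S: "(\<lambda>x. Gam (resolv J1 DO Om 1 x)) = S"
  by (simp add: S_def fun_eq_iff)

lemma G_tendsto:
  assumes "v \<in> DA"
  shows "((\<lambda>R. Gam (Om.Phi R (Sd v))) \<longlongrightarrow> G v) at_top"
proof -
  obtain g where g: "((\<lambda>R. Gam (Om.Phi R (Sd v))) \<longlongrightarrow> g) at_top"
    using G_lim assms unfolding Gam_resolv_eq_S Sd_def[symmetric] by blast
  moreover have "G v = g"
    unfolding G_def by (rule tendsto_Lim[OF trivial_limit_at_top_linorder g])
  ultimately show ?thesis by simp
qed

lemma G_relatively_bounded: "\<exists>\<delta><1. \<exists>\<beta>>0. \<forall>v\<in>DA. norm (G v) \<le> \<delta> * norm (A v + \<beta> *\<^sub>R J0 v)"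
  using G_bound unfolding Gam_resolv_eq_S Sd_def[symmetric] G_def .

lemma Gam_Phi_diff:
  assumes "R > 0"
  shows "Gam (Om.Phi R (x - y)) = Gam (Om.Phi R x) - Gam (Om.Phi R y)"
proof -
  have "bounded_linear (\<lambda>w. Gam (Om.Phi R w))"
    using cbounded_Gam_Phi[OF assms] by (simp add: cbounded_def)
  then show ?thesis
    using linear_diff[OF bounded_linear.linear] by blast
qed

lemma G_tendsto_eqI:
  assumes "v \<in> DA" "(f \<longlongrightarrow> g) at_top" "eventually (\<lambda>R. f R = Gam (Om.Phi R (Sd v))) at_top"
  shows "G v = g"
  using tendsto_unique[OF trivial_limit_at_top_linorder G_tendsto[OF assms(1)]]
    tendsto_cong[THEN iffD1, OF assms(3) assms(2)] by blast

lemma G_diff: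
  assumes "u \<in> DA" "v \<in> DA"
  shows "G (u - v) = G u - G v"
proof (rule G_tendsto_eqI[OF A.diff_mem_domain[OF assms]])
  show "((\<lambda>R. Gam (Om.Phi R (Sd u)) - Gam (Om.Phi R (Sd v))) \<longlongrightarrow> G u - G v) at_top"
    by (intro tendsto_diff G_tendsto assms)
  show "eventually (\<lambda>R. Gam (Om.Phi R (Sd u)) - Gam (Om.Phi R (Sd v)) = Gam (Om.Phi R (Sd (u - v)))) at_top"
    using eventually_gt_at_top[of 0]
    by eventually_elim (simp add: Sd_diff Gam_Phi_diff)
qed

lemma G_J:
  assumes "v \<in> DA"
  shows "G (J0 v) = J0 (G v)"
proof (rule G_tendsto_eqI[OF A.J_mem_domain[OF assms]])
  show "((\<lambda>R. J0 (Gam (Om.Phi R (Sd v)))) \<longlongrightarrow> J0 (G v)) at_top"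
    by (intro A.tendsto_J G_tendsto assms)
  show "eventually (\<lambda>R. J0 (Gam (Om.Phi R (Sd v))) = Gam (Om.Phi R (Sd (J0 v)))) at_top"
    using eventually_gt_at_top[of 0]
    by eventually_elim (simp add: Sd_J Om.Phi_J Gam_J Om.Phi_mem_domain)
qed

lemma inner_G_J:
  assumes "v \<in> DA"
  shows "inner (G v) (J0 v) = inner (Sd v) (Sd v)"
proof -
  have lim: "((\<lambda>R. inner (Gam (Om.Phi R (Sd v))) (J0 v)) \<longlongrightarrow> inner (G v) (J0 v)) at_top"
    by (intro tendsto_intros G_tendsto assms)
  have lim': "((\<lambda>R. inner (Sd v) (Om.Phi R (Sd v))) \<longlongrightarrow> inner (Sd v) (Sd v)) at_top"
    by (intro tendsto_intros Om.Phi_tendsto)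
  have "eventually (\<lambda>R. inner (Gam (Om.Phi R (Sd v))) (J0 v) = inner (Sd v) (Om.Phi R (Sd v))) at_top"
    using eventually_gt_at_top[of 0]
  proof eventually_elim
    case (elim R)
    let ?a = "Om.Phi R (Sd v)"
    have "inner (Gam (Om.Phi R (Sd v))) (J0 v) = inner (Sd v) (Om (Om.Phi R (J1 (Sd v))) - J1 (Om.Phi R (J1 (Sd v))))"
      using is_adjoint_Gam_Phi[OF elim] by (simp add: is_adjoint_def Sd_J)
    also have "\<dots> = inner (Sd v) (J1 (Om ?a)) + inner (Sd v) ?a"
      by (simp add: Om.Phi_J[OF elim] Om.T_J[OF Om.Phi_mem_domain[OF elim]] inner_diff_right inner_add_right)
    also have "inner (Sd v) (J1 (Om ?a)) = 0"
      using Om.T_Phi_symmetric[OF elim, of "J1 (Sd v)" "Sd v"]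
      by (simp add: Om.inner_J_left Om.T_Phi_J[OF elim] inner_commute)
    finally show ?case by simp
  qed
  from tendsto_cong[THEN iffD1, OF this lim] lim' show ?thesis
    by (rule tendsto_unique[OF trivial_limit_at_top_linorder])
qed

lemma G_skew:
  assumes "v \<in> DA" "u \<in> DA"
  shows "inner (G v) u - inner v (G u) = 2 * inner (J1 (Sd v)) (Sd u)"
proof -
  have lim: "((\<lambda>R. inner (Gam (Om.Phi R (Sd v))) u - inner v (Gam (Om.Phi R (Sd u)))) \<longlongrightarrow> inner (G v) u - inner v (G u)) at_top"
    by (intro tendsto_intros G_tendsto assms)
  have lim': "((\<lambda>R. 2 * inner (J1 (Om.Phi R (Sd v))) (Sd u)) \<longlongrightarrow> 2 * inner (J1 (Sd v)) (Sd u)) at_top"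
    by (intro tendsto_intros Om.tendsto_J Om.Phi_tendsto)
  have "eventually (\<lambda>R. inner (Gam (Om.Phi R (Sd v))) u - inner v (Gam (Om.Phi R (Sd u)))
      = 2 * inner (J1 (Om.Phi R (Sd v))) (Sd u)) at_top"
    using eventually_gt_at_top[of 0]
  proof eventually_elim
    case (elim R)
    let ?a = "Sd v" and ?b = "Sd u"
    have "inner (Gam (Om.Phi R ?a)) u = inner ?a (Om (Om.Phi R ?b)) - inner ?a (J1 (Om.Phi R ?b))"
      using is_adjoint_Gam_Phi[OF elim] by (simp add: is_adjoint_def inner_diff_right)
    moreover have "inner v (Gam (Om.Phi R ?b)) = inner ?b (Om (Om.Phi R ?a)) - inner ?b (J1 (Om.Phi R ?a))"
      using is_adjoint_Gam_Phi[OF elim] by (simp add: is_adjoint_def inner_diff_right inner_commute)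
    moreover have "inner ?a (Om (Om.Phi R ?b)) = inner ?b (Om (Om.Phi R ?a))"
      using Om.T_Phi_symmetric[OF elim, of ?a ?b] by (simp add: inner_commute)
    moreover have "inner ?a (J1 (Om.Phi R ?b)) = - inner (J1 (Om.Phi R ?a)) ?b"
      by (simp add: Om.inner_J_left Om.Phi_symmetric[OF elim] flip: Om.Phi_J[OF elim])
    ultimately show ?case
      by (simp add: inner_commute)
  qed
  from tendsto_cong[THEN iffD1, OF this lim] lim' show ?thesis
    by (rule tendsto_unique[OF trivial_limit_at_top_linorder])
qed

lemma inner_Om_Sd:
  assumes "\<phi> \<in> DO"
  shows "inner (Om \<phi>) (Sd u) = inner (Gam \<phi>) u + inner \<phi> (J1 (Sd u))"
proof -
  have "S (Om \<phi>) = S (Om \<phi> + J1 \<phi>) - S (J1 \<phi>)"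
    using bounded_linear_S by (simp add: linear_diff[OF bounded_linear.linear, symmetric])
  also have "\<dots> = Gam \<phi> - J0 (S \<phi>)"
    by (simp add: Gam_eq_S[OF assms] S_J)
  finally show ?thesis
    by (simp add: inner_S_Sd[symmetric] inner_diff_left A.inner_J_left inner_S_Sd Sd_J)
qed

definition coupled_domain :: "('a \<times> 'b) set" where
  "coupled_domain = {(v, \<phi> - Sd v) | v \<phi>. v \<in> DA \<and> \<phi> \<in> DO}"

lemma mem_coupled_domain_iff: "p \<in> coupled_domain \<longleftrightarrow> fst p \<in> DA \<and> snd p + Sd (fst p) \<in> DO"
  unfolding coupled_domain_def by (cases p) force

text \<open>The closed form of the paper's operator \<open>\<A>\<close>, see \<open>regularized_op_tendsto\<close>.\<close>

definition coupled_op :: "'a \<times> 'b \<Rightarrow> 'a \<times> 'b" where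
  "coupled_op p = (A (fst p) + Gam (snd p + Sd (fst p)) - G (fst p), Om (snd p + Sd (fst p)) - J1 (Sd (fst p)))"

lemma coupled_op_Pair: "coupled_op (v, \<phi> - Sd v) = (A v + Gam \<phi> - G v, Om \<phi> - J1 (Sd v))"
  by (simp add: coupled_op_def)

definition regularized_op :: "'a \<times> 'b \<Rightarrow> real \<Rightarrow> 'a \<times> 'b" where
  "regularized_op = (\<lambda>(v, w) R. (A v + Gam (PhiR J1 DO Om R w),
     badj J0 J1 (\<lambda>x. Gam (PhiR J1 DO Om R x)) v + Om (PhiR J1 DO Om R w)))"

lemma regularized_op_tendsto:
  assumes "p \<in> coupled_domain"
  shows "(regularized_op p \<longlongrightarrow> coupled_op p) at_top"
proof -
  obtain v \<phi> where p: "p = (v, \<phi> - Sd v)" "v \<in> DA" "\<phi> \<in> DO"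
    using assms unfolding coupled_domain_def by blast
  have "((\<lambda>R. (A v + Gam (Om.Phi R \<phi>) - Gam (Om.Phi R (Sd v)), Om (Om.Phi R \<phi>) - J1 (Om.Phi R (Sd v))))
      \<longlongrightarrow> coupled_op p) at_top"
    unfolding p(1) coupled_op_Pair
    by (intro tendsto_Pair tendsto_diff tendsto_add tendsto_const Gam_Phi_tendsto G_tendsto Om.T_Phi_tendsto
        Om.tendsto_J Om.Phi_tendsto p(2,3))
  moreover have "eventually (\<lambda>R. (A v + Gam (Om.Phi R \<phi>) - Gam (Om.Phi R (Sd v)), Om (Om.Phi R \<phi>) - J1 (Om.Phi R (Sd v)))
      = regularized_op p R) at_top"
    using eventually_gt_at_top[of 0]
  proof eventually_elim
    case (elim R)
    have "Om (Om.Phi R (\<phi> - Sd v)) = Om (Om.Phi R \<phi>) - Om (Om.Phi R (Sd v))"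
      using linear_diff[OF bounded_linear.linear[OF Om.bounded_linear_T_Phi[OF elim]]] .
    then show ?case
      by (simp add: p(1) regularized_op_def badj_Gam_Phi[OF elim] Gam_Phi_diff[OF elim] algebra_simps)
  qed
  ultimately show ?thesis
    by (rule tendsto_cong[THEN iffD1, rotated])
qed

lemma coupled_op_symmetric:
  assumes "p \<in> coupled_domain" "q \<in> coupled_domain"
  shows "inner (coupled_op p) q = inner p (coupled_op q)"
proof -
  obtain v \<phi> where p: "p = (v, \<phi> - Sd v)" "v \<in> DA" "\<phi> \<in> DO"
    using assms(1) unfolding coupled_domain_def by blast
  obtain u \<psi> where q: "q = (u, \<psi> - Sd u)" "u \<in> DA" "\<psi> \<in> DO"
    using assms(2) unfolding coupled_domain_def by blast
  have "inner (coupled_op p) q = inner (A v) u + inner (Gam \<phi>) u - inner (G v) u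
      + inner (Om \<phi>) \<psi> - inner (Om \<phi>) (Sd u) - inner (J1 (Sd v)) \<psi> + inner (J1 (Sd v)) (Sd u)"
    unfolding p(1) q(1) coupled_op_Pair by (simp add: inner_add_left inner_diff_left inner_diff_right)
  moreover have "inner p (coupled_op q) = inner v (A u) + inner (Gam \<psi>) v - inner v (G u)
      + inner \<phi> (Om \<psi>) - inner \<phi> (J1 (Sd u)) - inner (Om \<psi>) (Sd v) + inner (Sd v) (J1 (Sd u))"
    unfolding p(1) q(1) coupled_op_Pair
    by (simp add: inner_add_right inner_diff_left inner_diff_right inner_commute)
  ultimately show ?thesis
    using A.T_symmetric[OF p(2) q(2)] Om.T_symmetric[OF p(3) q(3)] inner_Om_Sd[OF p(3), of u]
      inner_Om_Sd[OF q(3), of v] G_skew[OF p(2) q(2)] Om.inner_J_left[of "Sd v" "Sd u"]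
    by (simp add: inner_commute)
qed

abbreviation Jprod :: "'a \<times> 'b \<Rightarrow> 'a \<times> 'b" where
  "Jprod \<equiv> \<lambda>(v, w). (J0 v, J1 w)"

lemma Jprod_mem_coupled_domain: "p \<in> coupled_domain \<Longrightarrow> Jprod p \<in> coupled_domain"
  unfolding mem_coupled_domain_iff by (simp add: case_prod_beta Sd_J A.J_mem_domain Om.J_mem_domain flip: Om.J_add)

lemma coupled_op_Jprod:
  assumes "p \<in> coupled_domain"
  shows "coupled_op (Jprod p) = Jprod (coupled_op p)"
proof -
  have "fst p \<in> DA" "snd p + Sd (fst p) \<in> DO"
    using assms unfolding mem_coupled_domain_iff by auto
  moreover have "J1 (snd p) + Sd (J0 (fst p)) = J1 (snd p + Sd (fst p))"
    by (simp add: Sd_J)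
  ultimately show ?thesis
    by (simp add: coupled_op_def case_prod_beta A.T_J Gam_J G_J Om.T_J Sd_J del: Om.J_add)
qed

lemma closure_coupled_domain: "closure coupled_domain = UNIV"
proof -
  have "(a, w) \<in> closure coupled_domain" for a w
  proof -
    obtain as where as: "\<And>n. as n \<in> DA" "as \<longlonglongrightarrow> a"
      using A.closure_domain closure_sequential by blast
    obtain ps where ps: "\<And>n. ps n \<in> DO" "ps \<longlonglongrightarrow> w + Sd a"
      using Om.closure_domain closure_sequential by blast
    have "(\<lambda>n. (as n, ps n - Sd (as n))) \<longlonglongrightarrow> (a, (w + Sd a) - Sd a)"
      by (intro tendsto_Pair tendsto_diff as ps bounded_linear.tendsto[OF bounded_linear_Sd])
    moreover have "(as n, ps n - Sd (as n)) \<in> coupled_domain" for n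
      unfolding coupled_domain_def using as ps by blast
    ultimately show ?thesis
      unfolding closure_sequential by (intro exI[of _ "\<lambda>n. (as n, ps n - Sd (as n))"]) simp
  qed
  then show ?thesis by auto
qed

text \<open>For \<open>(v, \<phi> - S\<^sup>\<dagger> v)\<close> with \<open>(\<Omega>\<^sub>1 + i m) \<phi> = g + (1 + m) i S\<^sup>\<dagger> v\<close>, the second component of
  \<open>(\<A> + i m) (v, \<phi> - S\<^sup>\<dagger> v)\<close> is \<open>g\<close> and the first one is
  \<open>(A + i m) v - (G - B m) v + \<Gamma> (\<Omega>\<^sub>1 + i m)\<^sup>-\<^sup>1 g\<close>.\<close>

definition B :: "real \<Rightarrow> 'a \<Rightarrow> 'a" where
  "B m v = (1 + m) *\<^sub>R Gam (resolv J1 DO Om m (J1 (Sd v)))"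

lemma bounded_linear_B:
  assumes "m \<noteq> 0"
  shows "bounded_linear (B m)"
proof -
  have "B m = (\<lambda>v. (1 + m) *\<^sub>R S (J1 (Sd v) + (1 - m) *\<^sub>R J1 (resolv J1 DO Om m (J1 (Sd v)))))"
  proof
    fix v
    define r where "r = resolv J1 DO Om m (J1 (Sd v))"
    have "J1 (Sd v) = Om r + m *\<^sub>R J1 r"
      using Om.T_resolv[OF assms] by (simp add: r_def)
    then have "Om r + J1 r = J1 (Sd v) + (1 - m) *\<^sub>R J1 r"
      by (simp add: algebra_simps)
    moreover have "Gam r = S (Om r + J1 r)"
      using Om.resolv_mem_domain[OF assms] by (simp add: r_def Gam_eq_S)
    ultimately show "B m v = (1 + m) *\<^sub>R S (J1 (Sd v) + (1 - m) *\<^sub>R J1 (resolv J1 DO Om m (J1 (Sd v))))"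
      by (simp add: B_def flip: r_def)
  qed
  moreover have "bounded_linear (\<lambda>v. (1 + m) *\<^sub>R S (J1 (Sd v) + (1 - m) *\<^sub>R J1 (resolv J1 DO Om m (J1 (Sd v)))))"
    by (intro bounded_linear_compose[OF bounded_linear_scaleR_right] bounded_linear_compose[OF bounded_linear_S]
        bounded_linear_add bounded_linear_compose[OF Om.bounded_linear_J bounded_linear_Sd]
        bounded_linear_compose[OF Om.bounded_linear_J bounded_linear_compose[OF Om.bounded_linear_resolv[OF assms]]]
        bounded_linear_compose[OF Om.bounded_linear_J bounded_linear_Sd])
  ultimately show ?thesis by simp
qed

lemma G_minus_B_dissipative:
  assumes "m \<noteq> 0" "v \<in> DA"
  shows "m * inner (G v - B m v) (J0 v) \<le> 0"
proof -
  define b where "b = resolv J1 DO Om m (J1 (Sd v))"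
  have b: "b \<in> DO" "Om b + m *\<^sub>R J1 b = J1 (Sd v)"
    using Om.resolv_mem_domain[OF assms(1)] Om.T_resolv[OF assms(1)] by (simp_all add: b_def)
  have "inner (B m v) (J0 v) = (1 + m) * inner (Om b + J1 b) (J1 (Sd v))"
    by (simp add: B_def b_def[symmetric] Gam_eq_S[OF b(1)] inner_S_Sd Sd_J)
  also have "\<dots> = (1 + m) * (norm (Om b)^2 + m * norm b^2)"
    using Om.inner_T_J_self[OF b(1)]
    by (simp add: b(2)[symmetric] inner_add_left inner_add_right inner_commute power2_norm_eq_inner)
  finally have B: "inner (B m v) (J0 v) = (1 + m) * (norm (Om b)^2 + m * norm b^2)" .
  have "inner (G v) (J0 v) = norm (J1 (Sd v))^2"
    by (simp add: inner_G_J[OF assms(2)] power2_norm_eq_inner)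
  also have "\<dots> = norm (Om b)^2 + m^2 * norm b^2"
    using Om.norm_T_plus_J_squared[OF b(1), of m] by (simp only: b(2))
  finally have "m * inner (G v - B m v) (J0 v) = - (m * m) * (norm (Om b)^2 + norm b^2)"
    by (simp add: inner_diff_left B power2_eq_square algebra_simps)
  then show ?thesis
    by simp
qed

lemma range_A_plus_J_minus_G_B:
  assumes "\<beta> > 0" "\<bar>m\<bar> = \<beta>" "\<delta> < 1" and G_le: "\<And>v. v \<in> DA \<Longrightarrow> norm (G v) \<le> \<delta> * norm (A v + \<beta> *\<^sub>R J0 v)"
  shows "\<exists>v\<in>DA. (A v + m *\<^sub>R J0 v) - (G v - B m v) = f"
proof -
  have m: "m \<noteq> 0" using assms(1,2) by auto
  interpret B: bounded_linear "B m" by (rule bounded_linear_B[OF m])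
  obtain c where c: "c > 0" "\<And>v. norm (B m v) \<le> norm v * c"
    using B.pos_bounded by blast
  define \<delta>' where "\<delta>' = max \<delta> 0"
  have \<delta>': "0 \<le> \<delta>'" "\<delta>' < 1"
    using assms(3) by (simp_all add: \<delta>'_def)
  have norm_eq: "norm (A v + \<beta> *\<^sub>R J0 v) = norm (A v + m *\<^sub>R J0 v)" if "v \<in> DA" for v
    using A.norm_T_plus_J_squared[OF that, of \<beta>] A.norm_T_plus_J_squared[OF that, of m] assms(2)
    by (metis norm_ge_zero power2_abs power2_eq_iff_nonneg)
  show ?thesis
  proof (rule continuity_method[where K="(\<delta>' + c / \<beta>) / (1 - \<delta>')"])
    show "u - v \<in> DA" "A (u - v) + m *\<^sub>R J0 (u - v) = (A u + m *\<^sub>R J0 u) - (A v + m *\<^sub>R J0 v)"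
      "G (u - v) - B m (u - v) = (G u - B m u) - (G v - B m v)" if "u \<in> DA" "v \<in> DA" for u v
      using that by (simp_all add: A.diff_mem_domain A.T_diff G_diff B.diff algebra_simps)
    show "\<exists>v\<in>DA. A v + m *\<^sub>R J0 v = h" for h
      by (rule A.range_T_plus_J[OF m])
    fix t :: real and v assume t: "0 \<le> t" "t \<le> 1" and v: "v \<in> DA"
    show "norm (G v - B m v) \<le> (\<delta>' + c / \<beta>) / (1 - \<delta>') * norm (A v + m *\<^sub>R J0 v - t *\<^sub>R (G v - B m v))"
    proof (rule norm_le_of_relative_bound[OF \<delta>' assms(1) less_imp_le[OF c(1)] t])
      have "norm (G v) \<le> \<delta>' * norm (A v + m *\<^sub>R J0 v)"
        using G_le[OF v] norm_eq[OF v] by (simp add: \<delta>'_def) (meson max.cobounded1 mult_right_mono norm_ge_zero order_trans)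
      then show "norm (G v - B m v) \<le> \<delta>' * norm (A v + m *\<^sub>R J0 v) + c * norm v"
        using norm_triangle_ineq4[of "G v" "B m v"] c(2)[of v] by (simp add: mult.commute)
      have "m * inner (t *\<^sub>R (G v - B m v)) (J0 v) = t * (m * inner (G v - B m v) (J0 v))"
        by (simp add: mult.left_commute)
      also have "\<dots> \<le> 0"
        using G_minus_B_dissipative[OF m v] t(1) by (rule mult_nonneg_nonpos[rotated])
      finally have "m * inner (t *\<^sub>R (G v - B m v)) (J0 v) \<le> 0" .
      from A.norm_le_dissipative_perturbation[OF v this]
      show "\<beta> * norm v \<le> norm (A v + m *\<^sub>R J0 v - t *\<^sub>R (G v - B m v))"
        by (simp only: assms(2))
    qed
  qed
qed

lemma range_coupled_op_plus_J:
  assumes "\<beta> > 0" "\<bar>m\<bar> = \<beta>" "\<delta> < 1" "\<And>v. v \<in> DA \<Longrightarrow> norm (G v) \<le> \<delta> * norm (A v + \<beta> *\<^sub>R J0 v)"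
  shows "\<exists>p\<in>coupled_domain. coupled_op p + m *\<^sub>R Jprod p = y"
proof -
  have m: "m \<noteq> 0" using assms(1,2) by auto
  obtain f g where y: "y = (f, g)" by (cases y)
  obtain v where v: "v \<in> DA" "(A v + m *\<^sub>R J0 v) - (G v - B m v) = f - Gam (resolv J1 DO Om m g)"
    using range_A_plus_J_minus_G_B[OF assms] by blast
  define \<phi> where "\<phi> = resolv J1 DO Om m (g + (1 + m) *\<^sub>R J1 (Sd v))"
  have \<phi>: "\<phi> \<in> DO" "Om \<phi> + m *\<^sub>R J1 \<phi> = g + (1 + m) *\<^sub>R J1 (Sd v)"
    using Om.resolv_mem_domain[OF m] Om.T_resolv[OF m] by (simp_all add: \<phi>_def)
  interpret R: bounded_linear "resolv J1 DO Om m" by (rule Om.bounded_linear_resolv[OF m])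
  have "Gam \<phi> = Gam (resolv J1 DO Om m g) + B m v"
    by (simp add: \<phi>_def B_def R.add R.scale Gam_plus Gam_scaleR Om.resolv_mem_domain[OF m] Om.scaleR_mem_domain)
  then have "coupled_op (v, \<phi> - Sd v) + m *\<^sub>R Jprod (v, \<phi> - Sd v) = (f, g)"
    using v(2) \<phi>(2) by (simp add: coupled_op_Pair algebra_simps)
  moreover have "(v, \<phi> - Sd v) \<in> coupled_domain"
    unfolding coupled_domain_def using v(1) \<phi>(1) by blast
  ultimately show ?thesis
    using y by blast
qed

theorem self_adjoint_coupled_op: "self_adjoint Jprod coupled_domain coupled_op"
proof -
  obtain \<delta> \<beta> where "\<delta> < 1" "\<beta> > 0" "\<And>v. v \<in> DA \<Longrightarrow> norm (G v) \<le> \<delta> * norm (A v + \<beta> *\<^sub>R J0 v)"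
    using G_relatively_bounded by blast
  note range = range_coupled_op_plus_J[OF \<open>\<beta> > 0\<close> _ this(1,3)]
  show ?thesis
  proof (rule self_adjointI_range[where \<beta>=\<beta>])
    show "complex_structure Jprod"
      by (rule complex_structure_prod[OF A.complex_structure_axioms Om.complex_structure_axioms])
    show "\<exists>x\<in>coupled_domain. coupled_op x + \<beta> *\<^sub>R Jprod x = y" for y
      using range[of \<beta>] \<open>\<beta> > 0\<close> by simp
    show "\<exists>x\<in>coupled_domain. coupled_op x - \<beta> *\<^sub>R Jprod x = y" for y
      using range[of "- \<beta>"] \<open>\<beta> > 0\<close> by simp
  qed (simp_all add: closure_coupled_domain Jprod_mem_coupled_domain coupled_op_Jprod coupled_op_symmetric)
qed

corollary self_adjoint_Lim_regularized_op:
  "self_adjoint Jprod coupled_domain (\<lambda>p. Lim at_top (regularized_op p))"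
  using self_adjoint_coupled_op regularized_op_tendsto
  by (subst self_adjoint_cong[where T'=coupled_op]) (simp_all add: tendsto_Lim)

end

theorem proposition1:
  fixes J0 :: "'a::{real_inner,complete_space} \<Rightarrow> 'a"
    and J1 :: "'b::{real_inner,complete_space} \<Rightarrow> 'b"
    and DA :: "'a set" and A :: "'a \<Rightarrow> 'a"
    and DO :: "'b set" and Om :: "'b \<Rightarrow> 'b"
    and Gam :: "'b \<Rightarrow> 'a"
  assumes J0: "cstruct J0" and J1: "cstruct J1"
    and A_sa: "self_adjoint J0 DA A"
    and Om_sa: "self_adjoint J1 DO Om"
    and Gam_add: "\<forall>\<phi>\<in>DO. \<forall>\<psi>\<in>DO. Gam (\<phi> + \<psi>) = Gam \<phi> + Gam \<psi>"
    and Gam_scale: "\<forall>\<phi>\<in>DO. \<forall>c. Gam (csc J1 c \<phi>) = csc J0 c (Gam \<phi>)"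
    and Gam_bound: "\<exists>C. \<forall>\<phi>\<in>DO. (norm (Gam \<phi>))^2 \<le> C * (norm (Om \<phi> + J1 \<phi>))^2"
    and G_lim: "\<forall>v\<in>DA. \<exists>g. ((\<lambda>R. Gam (PhiR J1 DO Om R
                      (badj J0 J1 (\<lambda>x. Gam (resolv J1 DO Om 1 x)) v))) \<longlongrightarrow> g) at_top"
    and G_bound: "\<exists>\<delta><1. \<exists>\<beta>>0. \<forall>v\<in>DA.
         norm (Lim at_top (\<lambda>R. Gam (PhiR J1 DO Om R
                      (badj J0 J1 (\<lambda>x. Gam (resolv J1 DO Om 1 x)) v))))
           \<le> \<delta> * norm (A v + \<beta> *\<^sub>R J0 v)"
  shows "(\<forall>R>0. cbounded J1 J0 (\<lambda>w. Gam (PhiR J1 DO Om R w)))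
    \<and> cbounded J1 J0 (\<lambda>x. Gam (resolv J1 DO Om 1 x))
    \<and> (let Sd = badj J0 J1 (\<lambda>x. Gam (resolv J1 DO Om 1 x));
           DD = {(v, \<phi> - Sd v) | v \<phi>. v \<in> DA \<and> \<phi> \<in> DO};
           f = (\<lambda>(v, w) R. (A v + Gam (PhiR J1 DO Om R w),
                  badj J0 J1 (\<lambda>x. Gam (PhiR J1 DO Om R x)) v + Om (PhiR J1 DO Om R w)))
       in (\<forall>p\<in>DD. \<exists>q. (f p \<longlongrightarrow> q) at_top)
          \<and> self_adjoint (\<lambda>(v, w). (J0 v, J1 w)) DD (\<lambda>p. Lim at_top (f p)))"
proof -
  interpret coupling J0 DA A J1 DO Om Gam
    using assms by unfold_locales (simp_all add: selfadjoint_axioms_def)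
  show ?thesis
    unfolding Let_def Gam_resolv_eq_S Sd_def[symmetric] coupled_domain_def[symmetric] regularized_op_def[symmetric]
    using cbounded_Gam_Phi cbounded_S regularized_op_tendsto self_adjoint_Lim_regularized_op by blast
qed

end
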